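(* Assume ${\tt m}_{-2}<\infty$. Fix $\ell\in\mathbb{N}$ and let $\varphi$ be a positive function, slowly varying at $\infty$, such that $\int_{[0,1]}y^{-2}\varphi(y^{-1})\Lambda(dy)<\infty$. Define $(a_n)_{n\in\mathbb{N}}$ by $a_1=\dots=a_\ell=0$ and $$a_n=p_{n,\ell}\,\varphi(n)+\sum_{k=1}^{n-1}p_{n,k}\,a_{n-k},\qquad n>\ell.$$ Then the sequence $(a_n)$ is bounded.
   Context: $\Lambda$ is a finite nonzero measure on $[0,1]$ without atoms at $0$ and $1$; ${\tt m}_{-2}:=\int_{[0,1]}x^{-2}\Lambda(dx)$. For $2\le k\le m$, $\lambda_{m,k}=\int_{[0,1]}x^{k}(1-x)^{m-k}x^{-2}\Lambda(dx)$, and $\lambda_n:=\sum_{k=2}^n\binom nk\lambda_{n,k}=\int_{[0,1]}x^{-2}(1-nx(1-x)^{n-1}-(1-x)^n)\Lambda(dx)$. For $1\le k<n$, $p_{n,k}:=\binom{n}{k+1}\lambda_{n,k+1}/\lambda_n$ (the probability that the first collision of the $\Lambda$-coalescent on $n$ blocks merges $k+1$ blocks). *)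

theory Defs
  imports "HOL-Analysis.Analysis"
begin

text \<open>Lambda-coalescent rates. The measure Lambda is a measure on the reals
  (Borel sets) concentrated on [0,1].\<close>

definition lam :: "real measure \<Rightarrow> nat \<Rightarrow> nat \<Rightarrow> real" where
  "lam \<Lambda> m k = (\<integral>x. x ^ k * (1 - x) ^ (m - k) / x ^ 2 \<partial>\<Lambda>)"

definition lam_total :: "real measure \<Rightarrow> nat \<Rightarrow> real" where
  "lam_total \<Lambda> n = (\<Sum>k=2..n. real (n choose k) * lam \<Lambda> n k)"

definition p_coal :: "real measure \<Rightarrow> nat \<Rightarrow> nat \<Rightarrow> real" where
  "p_coal \<Lambda> n k = real (n choose (k + 1)) * lam \<Lambda> n (k + 1) / lam_total \<Lambda> n"

definition slowly_varying :: "(real \<Rightarrow> real) \<Rightarrow> bool" where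
  "slowly_varying \<phi> \<longleftrightarrow>
     (\<forall>x>0. \<phi> x > 0) \<and> \<phi> \<in> borel_measurable borel \<and>
     (\<forall>c>0. ((\<lambda>x. \<phi> (c * x) / \<phi> x) \<longlongrightarrow> 1) at_top)"

end

theory Submission
  imports Defs
begin

text \<open>Put \<open>q(n,j) = (n choose j) * lam(n,j)\<close> (\<open>merger_rate\<close>), so that the recursion reads
  \<open>lam_total(n) * a(n) = q(n,l+1) * \<phi>(n) + (\<Sum>k. q(n,k+1) * a(n-k))\<close>. By induction
  \<open>0 \<le> a(n) \<le> b(n)\<close> for every nonnegative supersolution \<open>b\<close>, i.e. one with
  \<open>(\<Sum>k. q(n,k+1) * (b(n) - b(n-k))) \<ge> q(n,l+1) * \<phi>(n)\<close>; so it suffices to find a bounded one.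

  Take \<open>b(m) = (\<Sum>i\<le>m. w(i)) / c\<close> where
  \<open>w(i) = (MAX n\<in>{i..2i}. \<phi>(n)) / i * \<integral> (2ix)^(l+1) (1-x)^(i-l-1) / x^2 d\<Lambda>\<close> dominates
  \<open>q(n,l+1) * \<phi>(n) / n\<close> whenever \<open>i \<le> n \<le> 2i\<close>. Then
  \<open>b(n) - b(n-k) \<ge> k(n-k)/n^2 * q(n,l+1) * \<phi>(n) / c\<close>, and the supersolution inequality follows from
  \<open>(\<Sum>k. q(n,k+1) * k(n-k)) \<ge> c * n^2\<close>, which holds because \<open>\<Lambda>\<close> charges some \<open>[\<delta>, 1-\<delta>]\<close>.
  Finally \<open>b\<close> is bounded: Potter's bound \<open>\<phi>(y) \<le> 2 max(y/z, z/y) \<phi>(z)\<close> together with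
  \<open>(\<Sum>i. i^s (1-x)^i) = O(x^-(s+1))\<close> gives \<open>(\<Sum>i. w(i)) \<le> \<integral> (A \<phi>(1/x) + B) / x^2 d\<Lambda> < \<infinity>\<close>.\<close>

section \<open>Slowly varying functions\<close>

lemma slowly_varying_pos: "slowly_varying \<phi> \<Longrightarrow> 0 < x \<Longrightarrow> 0 < \<phi> x"
  unfolding slowly_varying_def by blast

lemma slowly_varying_measurable: "slowly_varying \<phi> \<Longrightarrow> \<phi> \<in> borel_measurable borel"
  unfolding slowly_varying_def by blast

text \<open>The constant \<open>7/5\<close> only matters through \<open>(7/5)\<^sup>2 < 2\<close>.\<close>

definition comparable_at :: "(real \<Rightarrow> real) \<Rightarrow> real \<Rightarrow> real \<Rightarrow> bool" where
  "comparable_at \<phi> x s \<longleftrightarrow> \<phi> (s * x) \<le> 7/5 * \<phi> x \<and> \<phi> x \<le> 7/5 * \<phi> (s * x)"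

lemma slowly_varying_eventually_comparable:
  assumes sv: "slowly_varying \<phi>" and s: "s > 0"
  shows "\<forall>\<^sub>F x in at_top. comparable_at \<phi> x s"
proof -
  have lim: "((\<lambda>x. \<phi> (s * x) / \<phi> x) \<longlongrightarrow> 1) at_top"
    using sv s unfolding slowly_varying_def by blast
  have "\<forall>\<^sub>F x in at_top. \<phi> (s * x) / \<phi> x < 7/5"
    by (rule order_tendstoD(2)[OF lim]) simp
  moreover have "\<forall>\<^sub>F x in at_top. 5/7 < \<phi> (s * x) / \<phi> x"
    by (rule order_tendstoD(1)[OF lim]) simp
  moreover have "\<forall>\<^sub>F x in at_top. (x::real) > 0"
    by (rule eventually_gt_at_top)
  ultimately show ?thesis
  proof eventually_elim
    case (elim x)
    with slowly_varying_pos[OF sv, of x] slowly_varying_pos[OF sv, of "s * x"] s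
    show ?case by (auto simp: comparable_at_def field_simps)
  qed
qed

lemma slowly_varying_incomparable_measure_tendsto:
  assumes sv: "slowly_varying \<phi>" and xs: "filterlim xs at_top sequentially"
  shows "(\<lambda>n. measure lborel ({1..4} \<inter> {s. \<not> comparable_at \<phi> (xs n) s})) \<longlonglongrightarrow> 0"
proof -
  have [measurable]: "\<phi> \<in> borel_measurable borel"
    using slowly_varying_measurable[OF sv] .
  define f where "f n = (indicator ({1..4} \<inter> {s. \<not> comparable_at \<phi> (xs n) s}) :: real \<Rightarrow> real)" for n
  have meas: "{1..4} \<inter> {s. \<not> comparable_at \<phi> (xs n) s} \<in> sets lborel" for n
    unfolding comparable_at_def by measurable
  define g :: "real \<Rightarrow> real" where "g = (\<lambda>_. 0)"
  have "(\<lambda>n. integral\<^sup>L lborel (f n)) \<longlonglongrightarrow> integral\<^sup>L lborel g"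
  proof (rule integral_dominated_convergence[where w="indicator {1..4::real}"])
    show "AE s in lborel. (\<lambda>n. f n s) \<longlonglongrightarrow> g s"
    proof (rule AE_I2)
      fix s :: real
      show "(\<lambda>n. f n s) \<longlonglongrightarrow> g s"
      proof (cases "s \<in> {1..4}")
        case True
        then have "\<forall>\<^sub>F n in sequentially. comparable_at \<phi> (xs n) s"
          by (intro eventually_compose_filterlim[OF slowly_varying_eventually_comparable[OF sv] xs]) simp
        then have "\<forall>\<^sub>F n in sequentially. f n s = 0"
          by eventually_elim (simp add: f_def)
        then show ?thesis unfolding g_def by (rule tendsto_eventually)
      qed (auto simp: f_def g_def indicator_def)
    qed
  qed (use meas in \<open>auto simp: f_def g_def indicator_def\<close>)
  then show ?thesis using meas by (simp add: f_def g_def)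
qed

lemma lborel_measure_cover_le:
  fixes U V :: "real set" and t :: real
  assumes Um: "U \<in> sets lborel" and Vm: "V \<in> sets lborel" and UV: "U \<subseteq> {1..4}" "V \<subseteq> {1..4}"
    and t: "t \<in> {1..2}" and cover: "\<And>s. s \<in> {2..4} \<Longrightarrow> s \<in> U \<or> s / t \<in> V"
  shows "2 \<le> measure lborel U + t * measure lborel V"
proof -
  have pw: "(indicator {2..4} s :: real) \<le> indicator U s + indicator V (0 + (1/t) * s)" for s :: real
    using cover[of s] by (auto simp: indicator_def)
  have "emeasure lborel W < \<infinity>" if "W \<subseteq> {1..4}" for W :: "real set"
    using emeasure_mono[OF that, of lborel] by (simp add: le_less_trans)
  then have iU: "integrable lborel (indicator U :: real \<Rightarrow> real)"
    and iV: "integrable lborel (indicator V :: real \<Rightarrow> real)"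
    using Um Vm UV by (auto intro: integrable_real_indicator)
  have iV': "integrable lborel (\<lambda>s. indicator V (0 + (1/t) * s) :: real)"
    using lborel_integrable_real_affine[OF iV, of "1/t" 0] t by auto
  have "2 = integral\<^sup>L lborel (indicator {2..4::real} :: real \<Rightarrow> real)"
    by simp
  also have "\<dots> \<le> integral\<^sup>L lborel (\<lambda>s. indicator U s + indicator V (0 + (1/t) * s) :: real)"
    using pw iU iV' by (intro integral_mono) auto
  also have "\<dots> = measure lborel U + t * measure lborel V"
    using iU iV' Um Vm t lborel_integral_real_affine[of "1/t" "indicator V :: real \<Rightarrow> real" 0]
    by simp
  finally show ?thesis .
qed

text \<open>A weak form of the uniform convergence theorem. If \<open>\<phi>(t x)\<close> and \<open>\<phi> x\<close> differed by
  a factor \<open>2\<close>, then since the sets of \<open>s \<in> [1,4]\<close> with \<open>s\<close> incomparable at \<open>x\<close> or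
  \<open>s/t\<close> incomparable at \<open>t x\<close> have measure less than \<open>1/2\<close> each, some \<open>s \<in> [2,4]\<close> would
  make both \<open>\<phi> x\<close> and \<open>\<phi>(t x)\<close> \<open>7/5\<close>-comparable to \<open>\<phi>(s x)\<close>.\<close>

lemma slowly_varying_uniform_doubling:
  assumes sv: "slowly_varying \<phi>"
  shows "\<exists>X>0. \<forall>x\<ge>X. \<forall>t\<in>{1..2}. \<phi> (t * x) \<le> 2 * \<phi> x \<and> \<phi> x \<le> 2 * \<phi> (t * x)"
proof (rule ccontr)
  have pos: "\<And>x. x > 0 \<Longrightarrow> \<phi> x > 0" using slowly_varying_pos[OF sv] .
  have [measurable]: "\<phi> \<in> borel_measurable borel" using slowly_varying_measurable[OF sv] .
  let ?close = "\<lambda>x y. \<phi> y \<le> 2 * \<phi> x \<and> \<phi> x \<le> 2 * \<phi> y"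
  assume neg: "\<not> ?thesis"
  have "\<exists>x t. x \<ge> real n + 1 \<and> t \<in> {1..2} \<and> \<not> ?close x (t * x)" for n :: nat
  proof -
    have "real n + 1 > 0" by simp
    with neg have "\<not> (\<forall>x\<ge>real n + 1. \<forall>t\<in>{1..2}. ?close x (t * x))" by blast
    then show ?thesis by blast
  qed
  then obtain xs ts where H: "\<And>n. xs n \<ge> real n + 1 \<and> ts n \<in> {1..2} \<and> \<not> ?close (xs n) (ts n * xs n)"
    by metis
  have xs_lim: "filterlim xs at_top sequentially"
    by (rule filterlim_at_top_mono[OF filterlim_real_sequentially])
       (use H in \<open>auto intro!: always_eventually\<close>, smt (verit) H)
  have "ts n * xs n \<ge> xs n" for n
  proof -
    have "xs n \<ge> 0" "ts n \<ge> 1" using H[of n] by (auto intro: order_trans[rotated])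
    then show ?thesis using mult_right_mono[of 1 "ts n" "xs n"] by simp
  qed
  then have ys_lim: "filterlim (\<lambda>n. ts n * xs n) at_top sequentially"
    by (intro filterlim_at_top_mono[OF xs_lim]) auto
  let ?U = "\<lambda>x. {1..4} \<inter> {s. \<not> comparable_at \<phi> x s}"
  have "\<forall>\<^sub>F n in sequentially. measure lborel (?U (xs n)) < 1/2 \<and> measure lborel (?U (ts n * xs n)) < 1/2"
    by (intro eventually_conj order_tendstoD(2)[OF slowly_varying_incomparable_measure_tendsto[OF sv]]
        xs_lim ys_lim) simp_all
  then obtain n where mU: "measure lborel (?U (xs n)) < 1/2" and mV: "measure lborel (?U (ts n * xs n)) < 1/2"
    by (auto simp: eventually_sequentially)
  define x t where "x = xs n" and "t = ts n"
  have t12: "t \<in> {1..2}" and viol: "\<not> ?close x (t * x)"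
    using H[of n] by (simp_all add: x_def t_def)
  have xpos: "x > 0"
    using H[of n] unfolding x_def by (auto intro: less_le_trans[rotated])
  have "s \<in> ?U x \<or> s / t \<in> ?U (t * x)" if s: "s \<in> {2..4}" for s
  proof (rule ccontr)
    assume "\<not> ?thesis"
    moreover have "s/t \<in> {1..4}" using s t12 by (auto simp: field_simps)
    ultimately have "comparable_at \<phi> x s" "comparable_at \<phi> (t * x) (s/t)" using s by auto
    moreover have "(s/t) * (t * x) = s * x" using t12 by simp
    ultimately have "\<phi> (s*x) \<le> 7/5 * \<phi> x" "\<phi> x \<le> 7/5 * \<phi> (s*x)"
        "\<phi> (s*x) \<le> 7/5 * \<phi> (t * x)" "\<phi> (t * x) \<le> 7/5 * \<phi> (s*x)"
      unfolding comparable_at_def by auto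
    moreover have "\<phi> x > 0" "\<phi> (t * x) > 0" "\<phi> (s * x) > 0"
      using pos xpos t12 s by auto
    ultimately show False using viol by linarith
  qed
  then have "2 \<le> measure lborel (?U x) + t * measure lborel (?U (t * x))"
    by (intro lborel_measure_cover_le t12) (auto simp: comparable_at_def)
  moreover have "t * measure lborel (?U (t * x)) \<le> 2 * (1/2)"
    using mV t12 unfolding x_def t_def by (intro mult_mono) auto
  ultimately show False using mU unfolding x_def by linarith
qed

lemma doubling_power_bound:
  fixes \<phi> :: "real \<Rightarrow> real"
  assumes X: "X > 0"
    and dbl: "\<And>x t. x \<ge> X \<Longrightarrow> t \<in> {1..2} \<Longrightarrow> \<phi> (t * x) \<le> 2 * \<phi> x \<and> \<phi> x \<le> 2 * \<phi> (t * x)"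
    and z: "z \<ge> X"
  shows "\<phi> (2^k * z) \<le> 2^k * \<phi> z \<and> \<phi> z \<le> 2^k * \<phi> (2^k * z)"
proof (induction k)
  case (Suc k)
  have "2^k * z \<ge> X" using z X by (smt (verit) mult_le_cancel_right1 one_le_power)
  from dbl[OF this, of 2] have h: "\<phi> (2^Suc k * z) \<le> 2 * \<phi> (2^k * z)" "\<phi> (2^k * z) \<le> 2 * \<phi> (2^Suc k * z)"
    by (auto simp: mult.assoc)
  have "2^k * \<phi> (2^k * z) \<le> 2^k * (2 * \<phi> (2^Suc k * z))"
    using h(2) by (intro mult_left_mono) auto
  with Suc.IH have "\<phi> z \<le> 2^k * (2 * \<phi> (2^Suc k * z))" by linarith
  then have "\<phi> z \<le> 2^Suc k * \<phi> (2^Suc k * z)" by (metis mult.assoc mult.commute power_Suc)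
  moreover have "\<phi> (2^Suc k * z) \<le> 2^Suc k * \<phi> z" using h(1) Suc.IH by simp
  ultimately show ?case by simp
qed simp

lemma doubling_ratio_bound:
  fixes \<phi> :: "real \<Rightarrow> real"
  assumes pos: "\<And>x. x > 0 \<Longrightarrow> \<phi> x > 0" and X: "X > 0"
    and dbl: "\<And>x t. x \<ge> X \<Longrightarrow> t \<in> {1..2} \<Longrightarrow> \<phi> (t * x) \<le> 2 * \<phi> x \<and> \<phi> x \<le> 2 * \<phi> (t * x)"
    and z: "z \<ge> X" and zy: "z \<le> y"
  shows "\<phi> y \<le> 2 * (y/z) * \<phi> z \<and> \<phi> z \<le> 2 * (y/z) * \<phi> y"
proof -
  have zp: "z > 0" using z X by auto
  have "\<phi> y \<le> 2 * (y/z) * \<phi> z \<and> \<phi> z \<le> 2 * (y/z) * \<phi> y" if "y \<le> 2^n * z" for n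
    using zy that
  proof (induction n arbitrary: y)
    case 0
    then show ?case using pos[of z] zp by auto
  next
    case (Suc n)
    show ?case
    proof (cases "y \<le> 2^n * z")
      case False
      have xz: "2^n * z \<ge> X" using z X by (smt (verit) mult_le_cancel_right1 one_le_power)
      define t where "t = y / (2^n * z)"
      have t12: "t \<in> {1..2}" using False Suc.prems zp by (auto simp: t_def field_simps)
      have "y = t * (2^n * z)" using zp by (simp add: t_def)
      then have u: "\<phi> y \<le> 2 * \<phi> (2^n * z)" "\<phi> (2^n * z) \<le> 2 * \<phi> y"
        using dbl[OF xz t12] by auto
      have r: "\<phi> (2^n * z) \<le> 2^n * \<phi> z" "\<phi> z \<le> 2^n * \<phi> (2^n * z)"
        using doubling_power_bound[OF X dbl z, of n] by auto
      have "2^n * \<phi> (2^n * z) \<le> 2^n * (2 * \<phi> y)" using u(2) by (intro mult_left_mono) auto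
      with r have a2: "\<phi> z \<le> 2^n * (2 * \<phi> y)" by linarith
      from u r have a1: "\<phi> y \<le> 2 * (2^n * \<phi> z)" by linarith
      have n2: "2^n \<le> y / z" using False zp by (auto simp: field_simps)
      have pz: "\<phi> z > 0" and py: "\<phi> y > 0" using pos zp Suc.prems by auto
      have "2 * (2^n * \<phi> z) \<le> 2 * ((y/z) * \<phi> z)"
        using n2 pz by (intro mult_left_mono mult_right_mono) auto
      moreover have "2^n * (2 * \<phi> y) \<le> (y/z) * (2 * \<phi> y)"
        using n2 py by (intro mult_right_mono) auto
      ultimately show ?thesis using a1 a2 by (simp add: algebra_simps)
    qed (use Suc in blast)
  qed
  moreover obtain n where "y / z < 2^n" using real_arch_pow[of 2 "y/z"] by auto
  then have "y \<le> 2^n * z" using zp by (simp add: field_simps)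
  ultimately show ?thesis by blast
qed

lemma slowly_varying_potter_bound:
  assumes sv: "slowly_varying \<phi>"
  shows "\<exists>X>0. \<forall>y\<ge>X. \<forall>z\<ge>X. \<phi> y \<le> 2 * max (y/z) (z/y) * \<phi> z"
proof -
  have pos: "\<And>x. x > 0 \<Longrightarrow> \<phi> x > 0" using slowly_varying_pos[OF sv] .
  obtain X where X: "X > 0"
    and dbl: "\<And>x t. x \<ge> X \<Longrightarrow> t \<in> {1..2} \<Longrightarrow> \<phi> (t * x) \<le> 2 * \<phi> x \<and> \<phi> x \<le> 2 * \<phi> (t * x)"
    using slowly_varying_uniform_doubling[OF sv] by blast
  have "\<phi> y \<le> 2 * max (y/z) (z/y) * \<phi> z" if y: "y \<ge> X" and z: "z \<ge> X" for y z
  proof -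
    have "z > 0" using z X by linarith
    then have \<phi>z: "\<phi> z > 0" by (rule pos)
    show ?thesis
    proof (cases "z \<le> y")
      case True
      then have "\<phi> y \<le> 2 * (y/z) * \<phi> z" using doubling_ratio_bound[OF pos X dbl z True] by blast
      also have "\<dots> \<le> 2 * max (y/z) (z/y) * \<phi> z" using \<phi>z by (intro mult_right_mono) auto
      finally show ?thesis .
    next
      case False
      then have "\<phi> y \<le> 2 * (z/y) * \<phi> z" using doubling_ratio_bound[OF pos X dbl y, of z] by auto
      also have "\<dots> \<le> 2 * max (y/z) (z/y) * \<phi> z" using \<phi>z by (intro mult_right_mono) auto
      finally show ?thesis .
    qed
  qed
  with X show ?thesis by blast
qed

section \<open>Elementary estimates for sums\<close>

lemma binomial_series_telescope:
  fixes y :: real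
  shows "(1-y) * (\<Sum>i<N. real ((i+Suc s) choose Suc s) * y^i) + real ((N+s) choose Suc s) * y^N
         = (\<Sum>i<N. real ((i+s) choose s) * y^i)"
proof (induction N)
  case (Suc N)
  have pascal: "real ((Suc N + s) choose Suc s) = real ((N+s) choose s) + real ((N+s) choose Suc s)"
    by (simp add: binomial_Suc_Suc)
  have "(1-y) * (\<Sum>i<Suc N. real ((i+Suc s) choose Suc s) * y^i) + real ((Suc N+s) choose Suc s) * y^Suc N
      = ((1-y) * (\<Sum>i<N. real ((i+Suc s) choose Suc s) * y^i) + real ((N+s) choose Suc s) * y^N)
        + real ((N+s) choose s) * y^N
        + ((1-y) * real ((N + Suc s) choose Suc s) * y^N + real ((Suc N+s) choose Suc s) * y^Suc N
           - real ((N+s) choose Suc s) * y^N - real ((N+s) choose s) * y^N)"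
    by (simp add: algebra_simps)
  also have "(1-y) * real ((N + Suc s) choose Suc s) * y^N + real ((Suc N+s) choose Suc s) * y^Suc N
           - real ((N+s) choose Suc s) * y^N - real ((N+s) choose s) * y^N = 0"
  proof -
    have e: "N + Suc s = Suc N + s" by simp
    show ?thesis unfolding e pascal by (simp add: algebra_simps)
  qed
  finally show ?case using Suc.IH by simp
qed simp

lemma binomial_series_partial_le:
  fixes y :: real
  assumes y: "0 \<le> y" "y < 1"
  shows "(\<Sum>i<N. real ((i+s) choose s) * y^i) \<le> 1 / (1-y)^Suc s"
proof (induction s arbitrary: N)
  case 0
  have "(1-y) * (\<Sum>i<N. y^i) = 1 - y^N" by (simp add: one_diff_power_eq)
  also have "\<dots> \<le> 1" using y by simp
  finally show ?case using y by (simp add: field_simps)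
next
  case (Suc s)
  have "(1-y) * (\<Sum>i<N. real ((i+Suc s) choose Suc s) * y^i) \<le> (\<Sum>i<N. real ((i+s) choose s) * y^i)"
  proof -
    have "0 \<le> real ((N+s) choose Suc s) * y^N" using y by simp
    with binomial_series_telescope[where y=y and N=N and s=s] show ?thesis by linarith
  qed
  also have "\<dots> \<le> 1 / (1-y)^Suc s" using Suc.IH .
  finally have "(1-y) * (\<Sum>i<N. real ((i+Suc s) choose Suc s) * y^i) \<le> 1 / (1-y)^Suc s" .
  then have "(\<Sum>i<N. real ((i+Suc s) choose Suc s) * y^i) \<le> (1 / (1-y)^Suc s) / (1-y)"
    using y by (subst pos_le_divide_eq) (auto simp: mult.commute)
  also have "\<dots> = 1 / (1-y)^Suc (Suc s)" by (simp add: power_Suc2)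
  finally show ?case .
qed

lemma power_le_fact_mult_binomial: "real j ^ s \<le> fact s * real ((j+s) choose s)"
proof (induction s)
  case 0 then show ?case by simp
next
  case (Suc s)
  have e: "real (Suc s) * real ((j + Suc s) choose Suc s) = real (Suc (j+s)) * real ((j+s) choose s)"
  proof -
    have "Suc s * (Suc (j+s) choose Suc s) = Suc (j+s) * ((j+s) choose s)" by (rule Suc_times_binomial)
    then show ?thesis by (metis add_Suc_right of_nat_mult)
  qed
  have "real j ^ Suc s = real j * real j ^ s" by simp
  also have "\<dots> \<le> real (Suc (j+s)) * (fact s * real ((j+s) choose s))"
    using Suc.IH by (intro mult_mono) auto
  also have "\<dots> = fact s * (real (Suc s) * real ((j + Suc s) choose Suc s))" unfolding e by simp
  also have "\<dots> = fact (Suc s) * real ((j + Suc s) choose Suc s)" by (simp add: fact_Suc)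
  finally show ?case .
qed

lemma power_series_partial_le:
  fixes y :: real
  assumes y: "0 \<le> y" "y < 1"
  shows "(\<Sum>i<N. real i ^ s * y^i) \<le> fact s / (1-y)^Suc s"
proof -
  have "(\<Sum>i<N. real i ^ s * y^i) \<le> (\<Sum>i<N. fact s * (real ((i+s) choose s) * y^i))"
    using power_le_fact_mult_binomial y by (intro sum_mono) (simp add: mult.assoc[symmetric] mult_right_mono)
  also have "\<dots> = fact s * (\<Sum>i<N. real ((i+s) choose s) * y^i)" by (simp add: sum_distrib_left)
  also have "\<dots> \<le> fact s * (1 / (1-y)^Suc s)" using binomial_series_partial_le[OF y] by (intro mult_left_mono) auto
  finally show ?thesis by simp
qed

lemma sum_diff_index_le:
  fixes g :: "nat \<Rightarrow> real"
  assumes g: "\<And>j. g j \<ge> 0"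
  shows "(\<Sum>i<N. g (i - r)) \<le> real r * g 0 + (\<Sum>j<N. g j)"
proof -
  have "(\<Sum>i<N. g (i - r)) \<le> (\<Sum>i<N+r. g (i - r))"
    by (rule sum_mono2) (auto simp: g)
  also have "\<dots> = (\<Sum>i\<in>{0..<r}. g (i - r)) + (\<Sum>i\<in>{r..<N+r}. g (i - r))"
    using sum.atLeastLessThan_concat[of 0 r "N+r" "\<lambda>i. g (i - r)"] by (simp add: atLeast0LessThan)
  also have "(\<Sum>i\<in>{r..<N+r}. g (i - r)) = (\<Sum>j\<in>{0..<N}. g j)"
    using sum.shift_bounds_nat_ivl[of "\<lambda>i. g (i - r)" 0 r N] by simp
  finally show ?thesis by (simp add: atLeast0LessThan)
qed

lemma sum_if_const_le:
  fixes c :: real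
  assumes "\<And>i. P i \<Longrightarrow> i < M" and "0 \<le> c"
  shows "(\<Sum>i<N. if P i then c else 0) \<le> real M * c"
proof -
  have "(\<Sum>i<N. if P i then c else 0) = (\<Sum>i\<in>{..<N} \<inter> {i. P i}. c)"
    by (subst sum.inter_restrict) (auto simp: indicator_def intro!: sum.cong)
  also have "\<dots> \<le> (\<Sum>i<M. c)" by (rule sum_mono2) (use assms in auto)
  finally show ?thesis by simp
qed

lemma power_series_shifted_partial_le:
  "\<exists>C\<ge>0. \<forall>(y::real) N. 0 \<le> y \<longrightarrow> y < 1 \<longrightarrow> (\<Sum>i<N. real i ^ s * y^(i-r)) \<le> C / (1-y)^Suc s"
proof (intro exI[of _ "2*real r*(2*real r)^s + 2^s * real r + 2^s * fact s"] conjI allI impI)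
  fix y :: real and N assume y: "0 \<le> y" "y < 1"
  have tm: "real i ^ s * y^(i-r) \<le> (if i < 2*r then (2*real r)^s else 0) + 2^s * (real (i-r) ^ s * y^(i-r))" for i
  proof (cases "i < 2*r")
    case True
    have "real i ^ s * y^(i-r) \<le> (2*real r)^s * 1"
      using True y by (intro mult_mono power_mono power_le_one) auto
    moreover have "0 \<le> 2^s * (real (i-r) ^ s * y^(i-r))" using y by simp
    ultimately show ?thesis using True by simp
  next
    case False
    then have "real i \<le> 2 * real (i - r)" by auto
    then have "real i ^ s * y^(i-r) \<le> (2 * real (i-r))^s * y^(i-r)"
      using y by (intro mult_right_mono power_mono) auto
    also have "\<dots> = 2^s * (real (i-r) ^ s * y^(i-r))" by (simp only: power_mult_distrib mult.assoc)
    finally show ?thesis using False by simp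
  qed
  have small: "(\<Sum>i<N. (if i < 2*r then (2*real r)^s else 0)) \<le> 2*real r*(2*real r)^s"
    using sum_if_const_le[of "\<lambda>i. i < 2*r" "2*r" "(2*real r)^s" N] by simp
  have "(\<Sum>i<N. real (i-r) ^ s * y^(i-r)) \<le> real r * (real 0 ^ s * y^0) + (\<Sum>j<N. real j ^ s * y^j)"
    by (rule sum_diff_index_le) (use y in simp)
  moreover have "real r * (real 0 ^ s * y^0) \<le> real r" by (cases s) auto
  moreover have "(\<Sum>j<N. real j ^ s * y^j) \<le> fact s / (1-y)^Suc s" by (rule power_series_partial_le[OF y])
  ultimately have large: "(\<Sum>i<N. real (i-r) ^ s * y^(i-r)) \<le> real r + fact s / (1-y)^Suc s"
    by linarith
  have "(\<Sum>i<N. real i ^ s * y^(i-r))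
      \<le> (\<Sum>i<N. (if i < 2*r then (2*real r)^s else 0)) + 2^s * (\<Sum>i<N. real (i-r) ^ s * y^(i-r))"
    using sum_mono[where K="{..<N}", OF tm] by (simp add: sum.distrib sum_distrib_left)
  also have "\<dots> \<le> 2*real r*(2*real r)^s + 2^s * (real r + fact s / (1-y)^Suc s)"
    using small large by (intro add_mono mult_left_mono) auto
  also have "\<dots> \<le> (2*real r*(2*real r)^s + 2^s * real r + 2^s * fact s) / (1-y)^Suc s"
  proof -
    define K where "K = 2*real r*(2*real r)^s + 2^s * real r"
    have p: "0 < (1-y)^Suc s" "(1-y)^Suc s \<le> 1" using y by (simp, intro power_le_one) auto
    have "K * (1-y)^Suc s \<le> K * 1" using p by (intro mult_left_mono) (auto simp: K_def)
    then have "K \<le> K / (1-y)^Suc s" using p by (subst le_divide_eq) auto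
    then show ?thesis unfolding K_def by (simp add: add_divide_distrib algebra_simps)
  qed
  finally show "(\<Sum>i<N. real i ^ s * y^(i-r)) \<le> (2*real r*(2*real r)^s + 2^s * real r + 2^s * fact s) / (1-y)^Suc s" .
qed simp

text \<open>At least \<open>min k \<lceil>n/2\<rceil>\<close> of the last \<open>k\<close> indices \<open>i \<le> n\<close> satisfy \<open>n \<le> 2 i\<close>,
  and \<open>min k (n/2) \<ge> k (n - k) / n\<close>.\<close>

lemma sum_last_terms_ge:
  fixes w :: "nat \<Rightarrow> real"
  assumes k: "1 \<le> k" "k \<le> n - 1" and w0: "\<And>i. w i \<ge> 0" and v: "v \<ge> 0"
    and wv: "\<And>i. 1 \<le> i \<Longrightarrow> i \<le> n \<Longrightarrow> n \<le> 2*i \<Longrightarrow> v \<le> w i"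
  shows "(\<Sum>i\<in>{n-k+1..n}. w i) \<ge> (real k * real (n-k) / real n) * v"
proof -
  define m where "m = max (n-k+1) ((n+1) div 2)"
  have nk: "n \<ge> 2" using k by simp
  have "(\<Sum>i\<in>{m..n}. w i) \<le> (\<Sum>i\<in>{n-k+1..n}. w i)"
    by (rule sum_mono2) (auto simp: m_def w0)
  moreover have "(\<Sum>i\<in>{m..n}. v) \<le> (\<Sum>i\<in>{m..n}. w i)"
  proof (rule sum_mono)
    fix i assume i: "i \<in> {m..n}"
    show "v \<le> w i" using i k by (intro wv) (auto simp: m_def)
  qed
  moreover have "(\<Sum>i\<in>{m..n}. v) = real (n + 1 - m) * v" by simp
  moreover have "real k * real (n-k) / real n \<le> real (n + 1 - m)"
  proof -
    have npos: "real n > 0" using nk by simp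
    have "real k * real (n-k) \<le> real (n + 1 - m) * real n"
    proof (cases "n - k + 1 \<ge> (n+1) div 2")
      case True
      then have "m = n - k + 1" by (simp add: m_def)
      then have "n + 1 - m = k" using k by simp
      then show ?thesis using k by (simp add: mult_left_mono)
    next
      case False
      then have "m = (n+1) div 2" by (simp add: m_def)
      moreover have "2 * ((n+1) div 2) \<le> n + 1" by simp
      ultimately have "2 * real (n + 1 - m) \<ge> real n" by linarith
      moreover have "4 * (real k * real (n-k)) \<le> real n * real n"
      proof -
        have "real n * real n - 4 * (real k * real (n-k)) = (real n - 2 * real k)^2"
          using k by (simp add: of_nat_diff power2_eq_square algebra_simps)
        then show ?thesis by (smt (verit) zero_le_power2)
      qed
      ultimately have "real n * real n \<le> 2 * real (n + 1 - m) * real n" and "4 * (real k * real (n-k)) \<le> real n * real n"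
        using npos by (auto intro: mult_right_mono)
      moreover have "0 \<le> real (n + 1 - m) * real n" by simp
      ultimately show ?thesis by linarith
    qed
    then show ?thesis using npos by (simp add: divide_le_eq)
  qed
  ultimately show ?thesis using v by (smt (verit) mult_right_mono)
qed

lemma sum_atLeastAtMost_diff_last:
  fixes w :: "nat \<Rightarrow> real"
  assumes k: "1 \<le> k" "k \<le> n - 1"
  shows "(\<Sum>i\<in>{1..n}. w i) - (\<Sum>i\<in>{1..n-k}. w i) = (\<Sum>i\<in>{n-k+1..n}. w i)"
proof -
  have "{1..n} = {1..n-k} \<union> {n-k+1..n}" using k by auto
  then have "(\<Sum>i\<in>{1..n}. w i) = (\<Sum>i\<in>{1..n-k}. w i) + (\<Sum>i\<in>{n-k+1..n}. w i)"
    by (simp add: sum.union_disjoint[symmetric] ivl_disj_int_two)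
  then show ?thesis by simp
qed

section \<open>Window maxima of \<open>\<phi>\<close> and the kernel sum\<close>

definition window_max :: "(real \<Rightarrow> real) \<Rightarrow> nat \<Rightarrow> real" where
  "window_max \<phi> i = Max ((\<lambda>n. \<phi> (real n)) ` {i..2*i})"

lemma window_max_ge: "n \<in> {i..2*i} \<Longrightarrow> \<phi> (real n) \<le> window_max \<phi> i"
  unfolding window_max_def by (rule Max_ge) auto

lemma window_max_le: "(\<And>n. n \<in> {i..2*i} \<Longrightarrow> \<phi> (real n) \<le> c) \<Longrightarrow> window_max \<phi> i \<le> c"
  unfolding window_max_def by (subst Max_le_iff) auto

lemma window_max_pos:
  assumes pos: "\<And>x. x > 0 \<Longrightarrow> \<phi> x > 0" and i: "1 \<le> i"
  shows "0 < window_max \<phi> i"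
proof -
  have "\<phi> (real i) \<le> window_max \<phi> i" by (rule window_max_ge) auto
  moreover have "\<phi> (real i) > 0" using pos i by simp
  ultimately show ?thesis by linarith
qed

definition window_kernel :: "(real \<Rightarrow> real) \<Rightarrow> nat \<Rightarrow> nat \<Rightarrow> real \<Rightarrow> real" where
  "window_kernel \<phi> r i x = window_max \<phi> i / real i * (2 * real i * x)^r * (1-x)^(i-r)"

lemma max_inverse_mult_power_div_le:
  fixes x :: real and i r :: nat
  assumes t: "t = real i * x" "t > 0" and x: "x > 0" and r: "r \<ge> 2"
  shows "max t (1/t) * t^r / real i \<le> x + x^(r+1) * real i ^ r"
proof -
  have i: "real i > 0" using t by (cases "i = 0") auto
  show ?thesis
  proof (cases "t \<ge> 1")
    case True
    moreover have "1/t \<le> 1" using True by simp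
    ultimately have "max t (1/t) = t" by (intro max_absorb1) linarith
    then have "max t (1/t) * t^r / real i = x^(r+1) * real i ^ r"
      using i unfolding t by (simp add: field_simps power_mult_distrib)
    then show ?thesis using x by simp
  next
    case False
    then have "1/t > 1" using t by (simp add: less_divide_eq)
    with False have "max t (1/t) = 1/t" by (simp add: max_def)
    moreover have "t^r = t * t^(r-1)" using r by (simp add: power_eq_if)
    ultimately have "max t (1/t) * t^r / real i = t^(r-1) / real i" using t(2) by simp
    also have "\<dots> \<le> t / real i" using False t r i by (intro divide_right_mono power_decreasing[of 1, simplified]) auto
    also have "\<dots> = x" using i t by simp
    finally have "max t (1/t) * t^r / real i \<le> x" .
    moreover have "0 \<le> x^(r+1) * real i ^ r" using x by simp
    ultimately show ?thesis by simp
  qed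
qed

lemma window_kernel_le_large_x:
  assumes B: "B \<ge> 0" "\<And>i. i \<ge> 1 \<Longrightarrow> window_max \<phi> i \<le> B * real i" and x: "0 < x" "x \<le> 1"
  shows "window_kernel \<phi> r i x \<le> B * 2^r * x^r * (real i^r * (1-x)^(i-r))"
proof (cases "i = 0")
  case False
  have "window_kernel \<phi> r i x = (window_max \<phi> i / real i) * (2^r * x^r * (real i^r * (1-x)^(i-r)))"
    by (simp add: window_kernel_def power_mult_distrib algebra_simps)
  also have "\<dots> \<le> B * (2^r * x^r * (real i^r * (1-x)^(i-r)))"
    using B(2)[of i] False x by (intro mult_right_mono) (auto simp: divide_le_eq mult.commute)
  finally show ?thesis by (simp add: mult.assoc)
qed (use x B in \<open>simp add: window_kernel_def\<close>)

context
  fixes \<phi> :: "real \<Rightarrow> real" and X :: real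
  assumes pos: "\<And>x. x > 0 \<Longrightarrow> \<phi> x > 0"
    and potter: "\<And>y z. y \<ge> X \<Longrightarrow> z \<ge> X \<Longrightarrow> \<phi> y \<le> 2 * max (y/z) (z/y) * \<phi> z"
    and X2: "X \<ge> 2"
begin

lemma window_max_le_linear: "\<exists>B\<ge>0. \<forall>i\<ge>1. window_max \<phi> i \<le> B * real i"
proof -
  define N where "N = nat \<lceil>X\<rceil>"
  define M where "M = Max ((\<lambda>n. \<phi> (real n)) ` {1..2*N})"
  have NX: "X \<le> real N" unfolding N_def by linarith
  have M: "\<phi> (real n) \<le> M" if "n \<in> {1..2*N}" for n
    unfolding M_def using that by (intro Max_ge) auto
  have M0: "M \<ge> 0" using M[of 1] pos[of 1] NX X2 by fastforce
  have \<phi>X: "\<phi> X > 0" using pos X2 by simp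
  have "window_max \<phi> i \<le> (M + 4 * \<phi> X) * real i" if i: "i \<ge> 1" for i
  proof (cases "real i < X")
    case True
    then have "i \<le> N" using NX by linarith
    then have "window_max \<phi> i \<le> M" using i by (intro window_max_le M) auto
    also have "\<dots> \<le> M * real i" using M0 i by (simp add: mult_le_cancel_left1)
    also have "\<dots> \<le> (M + 4 * \<phi> X) * real i" using \<phi>X by (intro mult_right_mono) auto
    finally show ?thesis .
  next
    case False
    have "\<phi> (real n) \<le> (M + 4 * \<phi> X) * real i" if n: "n \<in> {i..2*i}" for n
    proof -
      have nX: "real n \<ge> X" using n False by auto
      have "real n / X \<le> real n" using X2 by (simp add: divide_le_eq mult_le_cancel_left1)
      moreover have "X / real n \<le> 1" "1 \<le> real n" using nX X2 by (simp_all add: divide_le_eq)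
      ultimately have "max (real n / X) (X / real n) \<le> real n" by linarith
      then have "2 * max (real n / X) (X / real n) * \<phi> X \<le> 2 * real n * \<phi> X" using \<phi>X by simp
      with potter[OF nX order_refl] have "\<phi> (real n) \<le> 2 * real n * \<phi> X" by linarith
      also have "\<dots> \<le> 4 * real i * \<phi> X" using n \<phi>X by simp
      also have "\<dots> \<le> (M + 4 * \<phi> X) * real i" using M0 i by (simp add: algebra_simps)
      finally show ?thesis .
    qed
    then show ?thesis by (rule window_max_le)
  qed
  then show ?thesis using M0 \<phi>X by (intro exI[of _ "M + 4 * \<phi> X"]) auto
qed

lemma window_max_le_potter:
  assumes iX: "real i \<ge> X" and x: "0 < x" "1/x \<ge> X"
  shows "window_max \<phi> i \<le> 4 * max (real i * x) (1/(real i * x)) * \<phi> (1/x)"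
proof (rule window_max_le)
  fix n assume n: "n \<in> {i..2*i}"
  have nX: "real n \<ge> X" using n iX by auto
  have ip: "real i > 0" using iX X2 by simp
  have "max (real n / (1/x)) ((1/x) / real n) \<le> 2 * max (real i * x) (1/(real i * x))"
  proof -
    have "real n / (1/x) \<le> 2 * (real i * x)" "(1/x) / real n \<le> 1/(real i * x)"
      using n x ip by (auto simp: field_simps)
    moreover have "0 \<le> 1/(real i * x)" using x ip by simp
    moreover have "real i * x \<le> max (real i * x) (1/(real i * x))"
      "1/(real i * x) \<le> max (real i * x) (1/(real i * x))" by auto
    ultimately show ?thesis by (intro max.boundedI) argo+
  qed
  then have "2 * max (real n / (1/x)) ((1/x) / real n) * \<phi> (1/x)
      \<le> 2 * (2 * max (real i * x) (1/(real i * x))) * \<phi> (1/x)"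
    using pos[of "1/x"] x by (intro mult_right_mono mult_left_mono) auto
  with potter[OF nX x(2)]
  have "\<phi> (real n) \<le> 2 * (2 * max (real i * x) (1/(real i * x))) * \<phi> (1/x)" by linarith
  then show "\<phi> (real n) \<le> 4 * max (real i * x) (1/(real i * x)) * \<phi> (1/x)" by simp
qed

lemma window_kernel_le_small_x:
  assumes B: "B \<ge> 0" "\<And>i. i \<ge> 1 \<Longrightarrow> window_max \<phi> i \<le> B * real i"
    and r: "r \<ge> 2" and x: "0 < x" "x \<le> 1/X"
  shows "window_kernel \<phi> r i x \<le> (if real i < X then B * 2^r else 0)
           + 2^(r+2) * \<phi> (1/x) * (x * (1-x)^(i-r) + x^(r+1) * (real i^r * (1-x)^(i-r)))"
proof -
  have x1: "x \<le> 1" using x X2 by (smt (verit) divide_le_eq_1_pos)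
  have ox: "1/x \<ge> X" using x X2 by (simp add: field_simps)
  have P: "0 \<le> (1-x)^(i-r)" "(1-x)^(i-r) \<le> 1" using x1 x by (auto intro: power_le_one)
  have px: "\<phi> (1/x) > 0" using pos x by simp
  have R: "0 \<le> 2^(r+2) * \<phi> (1/x) * (x * (1-x)^(i-r) + x^(r+1) * (real i^r * (1-x)^(i-r)))"
    using px P x by simp
  consider "i = 0" | "i \<ge> 1" "real i < X" | "real i \<ge> X" by linarith
  then show ?thesis
  proof cases
    case 1
    then show ?thesis using R B by (simp add: window_kernel_def)
  next
    case 2
    have "real i * x \<le> X * x" using 2 x by (intro mult_right_mono) auto
    also have "\<dots> \<le> 1" using x X2 by (simp add: field_simps)
    finally have ix: "real i * x \<le> 1" .
    have "window_kernel \<phi> r i x = window_max \<phi> i / real i * (2^r * (real i * x)^r) * (1-x)^(i-r)"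
      by (simp add: window_kernel_def power_mult_distrib mult.assoc)
    also have "\<dots> \<le> B * (2^r * 1) * 1"
      using B(2)[OF 2(1)] 2 P ix x x1 B(1)
      by (intro mult_mono power_le_one) (auto simp: divide_le_eq mult.commute)
    finally have "window_kernel \<phi> r i x \<le> B * 2^r" by simp
    then show ?thesis unfolding if_P[OF 2(2)] using R by linarith
  next
    case 3
    define t where "t = real i * x"
    have tp: "t > 0" using 3 X2 x by (simp add: t_def)
    have "window_kernel \<phi> r i x = window_max \<phi> i * (2^r * (1-x)^(i-r)) * (t^r / real i)"
      by (simp add: window_kernel_def t_def power_mult_distrib)
    also have "\<dots> \<le> (4 * max t (1/t) * \<phi> (1/x)) * (2^r * (1-x)^(i-r)) * (t^r / real i)"
      using window_max_le_potter[OF 3 x(1) ox] P tp unfolding t_def by (intro mult_right_mono) auto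
    also have "\<dots> = 2^(r+2) * \<phi> (1/x) * (1-x)^(i-r) * (max t (1/t) * t^r / real i)"
      by (simp add: power_add)
    also have "\<dots> \<le> 2^(r+2) * \<phi> (1/x) * (1-x)^(i-r) * (x + x^(r+1) * real i ^ r)"
      using max_inverse_mult_power_div_le[OF t_def tp x(1) r] px P by (intro mult_left_mono) auto
    finally show ?thesis using 3 by (simp add: algebra_simps)
  qed
qed

lemma window_kernel_sum_le_small_x:
  assumes B0: "B0 \<ge> 0" "\<And>i. i \<ge> 1 \<Longrightarrow> window_max \<phi> i \<le> B0 * real i"
    and r: "r \<ge> 2" and N1: "X \<le> real N1" and x: "0 < x" "x \<le> 1/X"
    and C0: "x * (\<Sum>i<N. (1-x)^(i-r)) \<le> C0" and C: "x^(r+1) * (\<Sum>i<N. real i^r * (1-x)^(i-r)) \<le> C"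
  shows "(\<Sum>i<N. window_kernel \<phi> r i x) \<le> real N1 * (B0 * 2^r) + 2^(r+2) * \<phi> (1/x) * (C0 + C)"
proof -
  have "(\<Sum>i<N. window_kernel \<phi> r i x) \<le> (\<Sum>i<N. (if real i < X then B0 * 2^r else 0)
       + 2^(r+2) * \<phi> (1/x) * (x * (1-x)^(i-r) + x^(r+1) * (real i^r * (1-x)^(i-r))))"
    using window_kernel_le_small_x[OF B0 r x] by (intro sum_mono) auto
  also have "\<dots> = (\<Sum>i<N. (if real i < X then B0 * 2^r else 0)) + 2^(r+2) * \<phi> (1/x)
       * (x * (\<Sum>i<N. (1-x)^(i-r)) + x^(r+1) * (\<Sum>i<N. real i^r * (1-x)^(i-r)))"
    by (simp add: sum.distrib sum_distrib_left distrib_left)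
  also have "(\<Sum>i<N. (if real i < X then B0 * 2^r else 0)) \<le> real N1 * (B0 * 2^r)"
    by (rule sum_if_const_le) (use B0 N1 in auto)
  also note C0
  also note C
  finally show ?thesis using pos[of "1/x"] x by (simp add: mult_left_mono)
qed

lemma window_kernel_sum_le_large_x:
  assumes B0: "B0 \<ge> 0" "\<And>i. i \<ge> 1 \<Longrightarrow> window_max \<phi> i \<le> B0 * real i"
    and x: "1/X < x" "x \<le> 1" and C: "x^(r+1) * (\<Sum>i<N. real i^r * (1-x)^(i-r)) \<le> C"
  shows "(\<Sum>i<N. window_kernel \<phi> r i x) \<le> B0 * 2^r * X * C"
proof -
  have "0 < 1/X" using X2 by simp
  with x(1) have x0: "0 < x" by linarith
  have "(\<Sum>i<N. window_kernel \<phi> r i x) \<le> (\<Sum>i<N. B0 * 2^r * x^r * (real i^r * (1-x)^(i-r)))"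
    using window_kernel_le_large_x[OF B0 x0 x(2)] by (intro sum_mono) auto
  also have "\<dots> = B0 * 2^r * (1/x) * (x^(r+1) * (\<Sum>i<N. real i^r * (1-x)^(i-r)))"
    using x0 by (simp add: sum_distrib_left field_simps)
  also have "\<dots> \<le> B0 * 2^r * X * C"
  proof -
    have "0 \<le> x^(r+1) * (\<Sum>i<N. real i^r * (1-x)^(i-r))" using x x0 by (simp add: sum_nonneg)
    then show ?thesis using C B0 x x0 X2 by (intro mult_mono) (auto simp: field_simps)
  qed
  finally show ?thesis .
qed

lemma window_kernel_sum_le:
  assumes r: "r \<ge> 2"
  shows "\<exists>A B. \<forall>x N. 0 < x \<longrightarrow> x \<le> 1 \<longrightarrow> (\<Sum>i<N. window_kernel \<phi> r i x) \<le> A * \<phi> (1/x) + B"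
proof -
  obtain B0 where B0: "B0 \<ge> 0" "\<And>i. i \<ge> 1 \<Longrightarrow> window_max \<phi> i \<le> B0 * real i"
    using window_max_le_linear by blast
  obtain C0 where C0: "C0 \<ge> 0" "\<And>y N. 0 \<le> y \<Longrightarrow> y < 1 \<Longrightarrow> (\<Sum>i<N. real i ^ 0 * y^(i-r)) \<le> C0 / (1-y)^1"
    using power_series_shifted_partial_le[of 0 r] by auto
  obtain C where C: "C \<ge> 0" "\<And>y N. 0 \<le> y \<Longrightarrow> y < 1 \<Longrightarrow> (\<Sum>i<N. real i ^ r * y^(i-r)) \<le> C / (1-y)^Suc r"
    using power_series_shifted_partial_le[of r r] by blast
  obtain N1 :: nat where N1: "X \<le> real N1" using real_arch_simple by blast
  have "(\<Sum>i<N. window_kernel \<phi> r i x) \<le> 2^(r+2) * (C0 + C) * \<phi> (1/x) + (real N1 * (B0 * 2^r) + B0 * 2^r * X * C)"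
    if x: "0 < x" "x \<le> 1" for x N
  proof -
    have y: "0 \<le> 1 - x" "1 - x < 1" using x by auto
    have C0x: "x * (\<Sum>i<N. (1-x)^(i-r)) \<le> C0"
      using C0(2)[OF y, of N] x by (simp add: field_simps)
    have "x^(r+1) * (\<Sum>i<N. real i^r * (1-x)^(i-r)) \<le> x^(r+1) * (C / x^Suc r)"
      using C(2)[OF y] x by (intro mult_left_mono) auto
    then have Cx: "x^(r+1) * (\<Sum>i<N. real i^r * (1-x)^(i-r)) \<le> C" using x by simp
    have "0 \<le> B0 * 2^r * X * C" "0 \<le> real N1 * (B0 * 2^r)" "0 \<le> 2^(r+2) * (C0 + C) * \<phi> (1/x)"
      using B0 C0 C X2 pos[of "1/x"] x by simp_all
    moreover have "2^(r+2) * \<phi> (1/x) * (C0 + C) = 2^(r+2) * (C0 + C) * \<phi> (1/x)" by (simp only: mult_ac)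
    moreover have "(\<Sum>i<N. window_kernel \<phi> r i x) \<le> real N1 * (B0 * 2^r) + 2^(r+2) * \<phi> (1/x) * (C0 + C)
        \<or> (\<Sum>i<N. window_kernel \<phi> r i x) \<le> B0 * 2^r * X * C"
    proof (cases "x \<le> 1/X")
      case True
      then show ?thesis using window_kernel_sum_le_small_x[OF B0 r N1 x(1) True C0x Cx] by blast
    next
      case False
      then show ?thesis using window_kernel_sum_le_large_x[OF B0 _ x(2) Cx] by simp
    qed
    ultimately show ?thesis by linarith
  qed
  then show ?thesis by blast
qed

end

section \<open>The collision moment\<close>

definition collision_moment :: "nat \<Rightarrow> real \<Rightarrow> real" where
  "collision_moment n x =
     (\<Sum>k=1..n-1. real (n choose (k+1)) * x^(k+1) * (1-x)^(n-(k+1)) * real k * real (n-k))"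

lemma collision_moment_nonneg: "0 \<le> x \<Longrightarrow> x \<le> 1 \<Longrightarrow> 0 \<le> collision_moment n x"
  unfolding collision_moment_def by (intro sum_nonneg) simp

lemma Bernstein_sum_quadratic:
  fixes x :: real
  shows "(\<Sum>j\<le>n. Bernstein n j x * ((real j - 1) * (real n + 1 - real j)))
       = (real n + 1) * real n * x - real n * (real n - 1) * x^2 - (real n + 1)"
proof -
  have "(\<Sum>j\<le>n. Bernstein n j x * ((real j - 1) * (real n + 1 - real j)))
      = (\<Sum>j\<le>n. (real n + 1) * (real j * Bernstein n j x) - real j * (real j - 1) * Bernstein n j x
           - (real n + 1) * Bernstein n j x)"
    by (intro sum.cong) (auto simp: algebra_simps)
  also have "\<dots> = (real n + 1) * (\<Sum>j\<le>n. real j * Bernstein n j x)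
      - (\<Sum>j\<le>n. real j * (real j - 1) * Bernstein n j x) - (real n + 1) * (\<Sum>j\<le>n. Bernstein n j x)"
    by (simp only: sum_subtractf sum_distrib_left)
  finally show ?thesis by simp
qed

lemma collision_moment_eq_Bernstein_sum:
  fixes x :: real
  assumes n: "n \<ge> 2"
  shows "collision_moment n x = (\<Sum>j=2..n. Bernstein n j x * ((real j - 1) * (real n + 1 - real j)))"
proof -
  have "(\<Sum>j=2..n. Bernstein n j x * ((real j - 1) * (real n + 1 - real j)))
     = (\<Sum>j=Suc 1..Suc (n-1). Bernstein n j x * ((real j - 1) * (real n + 1 - real j)))"
    using n by (simp add: Suc_diff_1 numeral_2_eq_2)
  also have "\<dots> = (\<Sum>k=1..n-1. Bernstein n (Suc k) x * ((real (Suc k) - 1) * (real n + 1 - real (Suc k))))"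
    by (rule sum.shift_bounds_cl_Suc_ivl)
  also have "\<dots> = collision_moment n x"
    unfolding collision_moment_def by (intro sum.cong) (auto simp: Bernstein_def of_nat_diff)
  finally show ?thesis by simp
qed

lemma collision_moment_ge_quadratic:
  fixes x :: real
  assumes n: "n \<ge> 2" and x: "0 \<le> x" "x \<le> 1"
  shows "collision_moment n x \<ge> real n ^ 2 * (x - x^2) - (real n + 1)"
proof -
  have split: "{..n} = {0,1} \<union> {2..n}" using n by auto
  have "(\<Sum>j\<le>n. Bernstein n j x * ((real j - 1) * (real n + 1 - real j)))
      = Bernstein n 0 x * (- (real n + 1)) + (\<Sum>j=2..n. Bernstein n j x * ((real j - 1) * (real n + 1 - real j)))"
    unfolding split by (subst sum.union_disjoint) auto
  moreover have "Bernstein n 0 x * (real n + 1) \<ge> 0" using Bernstein_nonneg[OF x] by simp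
  ultimately have "collision_moment n x \<ge> (real n + 1) * real n * x - real n * (real n - 1) * x^2 - (real n + 1)"
    unfolding collision_moment_eq_Bernstein_sum[OF n] Bernstein_sum_quadratic by linarith
  moreover have "(real n + 1) * real n * x - real n * (real n - 1) * x^2
      = real n ^ 2 * (x - x^2) + real n * x + real n * x^2"
    by (simp add: algebra_simps power2_eq_square)
  moreover have "real n * x \<ge> 0" "real n * x^2 \<ge> 0" using x by auto
  ultimately show ?thesis by linarith
qed

lemma collision_moment_ge_first_term:
  fixes x :: real
  assumes n: "n \<ge> 2" and x: "0 \<le> x" "x \<le> 1"
  shows "collision_moment n x \<ge> x^2 * (1-x)^(n-2)"
proof -
  define f where "f k = real (n choose (k+1)) * x^(k+1) * (1-x)^(n-(k+1)) * real k * real (n-k)" for k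
  have "f 1 \<le> collision_moment n x"
    unfolding collision_moment_def f_def[symmetric]
    by (rule member_le_sum) (use n x in \<open>auto simp: f_def\<close>)
  moreover have "f 1 = real (n choose 2) * real (n - 1) * (x^2 * (1-x)^(n-2))"
    by (simp add: f_def numeral_2_eq_2 power2_eq_square)
  moreover have c1: "real (n choose 2) * real (n - 1) \<ge> 1"
  proof -
    have "n choose 2 \<ge> 1" "n - 1 \<ge> 1" using n by (simp_all add: Suc_le_eq)
    then have "(n choose 2) * (n - 1) \<ge> 1" by (simp add: Suc_le_eq)
    then show ?thesis by (metis of_nat_1 of_nat_le_iff of_nat_mult)
  qed
  moreover have "x^2 * (1-x)^(n-2) \<ge> 0" using x by simp
  ultimately have "1 * (x^2 * (1-x)^(n-2)) \<le> collision_moment n x"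
    using mult_right_mono[OF c1, of "x^2 * (1-x)^(n-2)"] by linarith
  then show ?thesis by simp
qed

lemma collision_moment_ge_interior:
  fixes x \<delta> :: real
  assumes \<delta>: "0 < \<delta>" "\<delta> \<le> 1/2" and n: "n \<ge> 2" and x: "\<delta> \<le> x" "x \<le> 1 - \<delta>"
    and nd: "real n * \<delta> \<ge> 8"
  shows "collision_moment n x \<ge> real n^2 * (\<delta>/4)"
proof -
  have "x - x^2 \<ge> \<delta>/2"
  proof (cases "x \<le> 1/2")
    case True
    have "x * (1 - x) \<ge> \<delta> * (1/2)" using x True \<delta> by (intro mult_mono) auto
    then show ?thesis by (simp add: power2_eq_square algebra_simps)
  next
    case False
    have "x * (1 - x) \<ge> (1/2) * \<delta>" using x False \<delta> by (intro mult_mono) auto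
    then show ?thesis by (simp add: power2_eq_square algebra_simps)
  qed
  then have "real n^2 * (x - x^2) \<ge> real n^2 * (\<delta>/2)" by (intro mult_left_mono) auto
  moreover have "real n + 1 \<le> real n^2 * (\<delta>/4)"
  proof -
    have "real n + 1 \<le> real n * 8 / 4" using n by simp
    also have "\<dots> \<le> real n * (real n * \<delta>) / 4" using nd by (intro divide_right_mono mult_left_mono) auto
    finally show ?thesis by (simp add: power2_eq_square)
  qed
  moreover have "real n^2 * (\<delta>/2) = 2 * (real n^2 * (\<delta>/4))" by simp
  moreover have "0 \<le> x" "x \<le> 1" using x \<delta> by auto
  ultimately show ?thesis using collision_moment_ge_quadratic[OF n, of x] by linarith
qed

lemma collision_moment_div_eq:
  "collision_moment n x / x^2
     = (\<Sum>k=1..n-1. real (n choose (k+1)) * (x^(k+1) * (1-x)^(n-(k+1)) / x^2) * (real k * real (n-k)))"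
  unfolding collision_moment_def by (simp add: sum_divide_distrib) (intro sum.cong, auto simp: algebra_simps)

text \<open>For large \<open>n\<close> the quadratic bound wins on \<open>[\<delta>, 1-\<delta>]\<close>; for the finitely many
  small \<open>n\<close> the first term, which is at least \<open>\<delta>^n\<close> there, does.\<close>

lemma collision_moment_ge_indicator:
  fixes x \<delta> c :: real
  assumes \<delta>: "0 < \<delta>" "\<delta> \<le> 1/2" and n: "n \<ge> 2" and x: "0 < x" "x \<le> 1"
    and c: "c \<le> \<delta>/4" "c * real N^2 \<le> \<delta>^N" "c \<ge> 0" and N: "real N * \<delta> \<ge> 8"
  shows "c * real n^2 * indicator {\<delta>..1-\<delta>} x \<le> collision_moment n x / x^2"
proof (cases "x \<in> {\<delta>..1-\<delta>}")
  case False
  then show ?thesis using collision_moment_nonneg[of x n] x by simp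
next
  case True
  then have xd: "\<delta> \<le> x" "x \<le> 1 - \<delta>" by auto
  have F0: "0 \<le> collision_moment n x" using collision_moment_nonneg[of x n] x by simp
  have x2: "0 < x^2" "x^2 \<le> 1" using x by (auto intro: power_le_one)
  show ?thesis
  proof (cases "n \<ge> N")
    case True
    have "real n * \<delta> \<ge> 8"
      using N True \<delta> by (smt (verit) mult_right_mono of_nat_le_iff)
    then have F1: "collision_moment n x \<ge> real n^2 * (\<delta>/4)"
      by (rule collision_moment_ge_interior[OF \<delta> n xd])
    have "c * real n^2 \<le> (\<delta>/4) * real n^2" using c by (intro mult_right_mono) auto
    also have "\<dots> \<le> collision_moment n x" using F1 by (simp add: mult.commute)
    also have "\<dots> \<le> collision_moment n x / x^2"
      using F0 x2 by (simp add: le_divide_eq mult_left_le)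
    finally show ?thesis using True xd by simp
  next
    case False
    have "collision_moment n x / x^2 \<ge> (1-x)^(n-2)"
      using collision_moment_ge_first_term[OF n, of x] x x2 by (simp add: le_divide_eq mult.commute)
    moreover have "c * real n^2 \<le> c * real N^2" using False c by (intro mult_left_mono power_mono) auto
    moreover have "\<delta>^N \<le> \<delta>^(n-2)" using False \<delta> by (intro power_decreasing) auto
    moreover have "\<delta>^(n-2) \<le> (1-x)^(n-2)" using xd \<delta> by (intro power_mono) auto
    ultimately show ?thesis using c xd by simp
  qed
qed

section \<open>Comparison with a supersolution\<close>

lemma recursion_le_supersolution:
  fixes q :: "nat \<Rightarrow> nat \<Rightarrow> real" and \<psi> a b :: "nat \<Rightarrow> real"
  assumes q_nonneg: "\<And>n k. 0 \<le> q n k"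
    and q_pos: "\<And>n. l < n \<Longrightarrow> 0 < (\<Sum>k=1..n-1. q n k)"
    and \<psi>_nonneg: "\<And>n. l < n \<Longrightarrow> 0 \<le> \<psi> n"
    and init: "\<And>n. 1 \<le> n \<Longrightarrow> n \<le> l \<Longrightarrow> a n = 0"
    and rec: "\<And>n. l < n \<Longrightarrow> (\<Sum>k=1..n-1. q n k) * a n = \<psi> n + (\<Sum>k=1..n-1. q n k * a (n-k))"
    and b_nonneg: "\<And>n. 0 \<le> b n"
    and super: "\<And>n. l < n \<Longrightarrow> \<psi> n \<le> (\<Sum>k=1..n-1. q n k * (b n - b (n-k)))"
    and n: "1 \<le> n"
  shows "0 \<le> a n \<and> a n \<le> b n"
  using n
proof (induction n rule: less_induct)
  case (less n)
  show ?case
  proof (cases "n \<le> l")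
    case True
    then show ?thesis using init less.prems b_nonneg by simp
  next
    case False
    then have nl: "l < n" by simp
    define L where "L = (\<Sum>k=1..n-1. q n k)"
    have IH: "0 \<le> a (n-k) \<and> a (n-k) \<le> b (n-k)" if "k \<in> {1..n-1}" for k
      using less.IH[of "n-k"] that by auto
    have "(\<Sum>k=1..n-1. q n k * a (n-k)) \<le> (\<Sum>k=1..n-1. q n k * b (n-k))"
      using IH q_nonneg by (intro sum_mono mult_left_mono) auto
    moreover have "(\<Sum>k=1..n-1. q n k * (b n - b (n-k))) = L * b n - (\<Sum>k=1..n-1. q n k * b (n-k))"
      by (simp add: L_def right_diff_distrib sum_subtractf sum_distrib_right)
    ultimately have "L * a n \<le> L * b n"
      using rec[OF nl] super[OF nl] unfolding L_def by linarith
    moreover have "0 \<le> (\<Sum>k=1..n-1. q n k * a (n-k))"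
      using IH q_nonneg by (intro sum_nonneg mult_nonneg_nonneg) auto
    then have "0 \<le> L * a n" using rec[OF nl] \<psi>_nonneg[OF nl] unfolding L_def by linarith
    ultimately show ?thesis
      using q_pos[OF nl] unfolding L_def[symmetric] by (simp add: zero_le_mult_iff)
  qed
qed

section \<open>Integrals against \<open>\<Lambda>\<close>\<close>

lemma rate_kernel_le_one:
  fixes x :: real
  assumes j: "j \<ge> 2" and x: "0 < x" "x \<le> 1"
  shows "x^j * (1-x)^(n-j) / x^2 \<le> 1"
proof -
  have "x^j = x^2 * x^(j-2)" using j by (metis le_add_diff_inverse power_add)
  then have "x^j * (1-x)^(n-j) / x^2 = x^(j-2) * (1-x)^(n-j)" using x by simp
  then show ?thesis using x by (simp add: mult_le_one power_le_one)
qed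

lemma scaled_rate_kernel_le:
  fixes x :: real
  assumes r: "r \<ge> 2" and x: "0 < x" "x \<le> 1"
  shows "(2*real i*x)^r * (1-x)^(i-r) / x^2 \<le> (2*real i)^r"
proof -
  have "(2*real i)^r * (x^r * (1-x)^(i-r) / x^2) \<le> (2*real i)^r * 1"
    using rate_kernel_le_one[OF r x, of i] by (intro mult_left_mono) auto
  then show ?thesis by (simp add: power_mult_distrib)
qed

lemma UN_shrinking_intervals_eq: "(\<Union>m::nat. {1/(real m+2) .. 1 - 1/(real m+2)}) = {0<..<1::real}"
proof
  show "(\<Union>m::nat. {1/(real m+2) .. 1 - 1/(real m+2)}) \<subseteq> {0<..<1}"
  proof
    fix x assume "x \<in> (\<Union>m::nat. {1/(real m+2) .. 1 - 1/(real m+2)})"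
    then obtain m where "x \<in> {1/(real m+2) .. 1 - 1/(real m+2)}" by auto
    then have "1/(real m+2) \<le> x" "x \<le> 1 - 1/(real m+2)" by auto
    moreover have "0 < 1/(real m+2)" by simp
    ultimately show "x \<in> {0<..<1}" unfolding greaterThanLessThan_iff by linarith
  qed
  show "{0<..<1} \<subseteq> (\<Union>m::nat. {1/(real m+2) .. 1 - 1/(real m+2)})"
  proof
    fix x :: real assume x: "x \<in> {0<..<1}"
    define e where "e = min x (1-x)"
    have e: "e > 0" using x by (simp add: e_def)
    obtain m where "1/e \<le> real m" using real_arch_simple by blast
    then have "1/e < real m + 2" by linarith
    then have "1/(real m+2) \<le> e" using e by (simp add: field_simps)
    then have "x \<in> {1/(real m+2) .. 1 - 1/(real m+2)}" unfolding e_def by auto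
    then show "x \<in> (\<Union>m::nat. {1/(real m+2) .. 1 - 1/(real m+2)})" by auto
  qed
qed

definition merger_rate :: "real measure \<Rightarrow> nat \<Rightarrow> nat \<Rightarrow> real" where
  "merger_rate \<Lambda> n j = real (n choose j) * lam \<Lambda> n j"

lemma lam_total_eq_sum_merger_rate:
  assumes n: "n \<ge> 2"
  shows "lam_total \<Lambda> n = (\<Sum>k=1..n-1. merger_rate \<Lambda> n (k+1))"
proof -
  have "lam_total \<Lambda> n = (\<Sum>k=Suc 1..Suc (n-1). real (n choose k) * lam \<Lambda> n k)"
    unfolding lam_total_def using n by (simp add: Suc_diff_1 numeral_2_eq_2)
  also have "\<dots> = (\<Sum>k=1..n-1. real (n choose Suc k) * lam \<Lambda> n (Suc k))"
    by (rule sum.shift_bounds_cl_Suc_ivl)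
  finally show ?thesis by (simp add: merger_rate_def)
qed

locale unit_interval_measure =
  fixes \<Lambda> :: "real measure"
  assumes sets_eq_borel: "sets \<Lambda> = sets borel"
    and finite: "finite_measure \<Lambda>"
    and AE_in_unit_interval: "AE x in \<Lambda>. 0 < x \<and> x < 1"
    and nontrivial: "emeasure \<Lambda> UNIV \<noteq> 0"
begin

lemma space_eq_UNIV: "space \<Lambda> = UNIV"
  using sets_eq_imp_space_eq[OF sets_eq_borel] by simp

lemma measurable_from_borel: "f \<in> borel_measurable borel \<Longrightarrow> f \<in> borel_measurable \<Lambda>"
  by (subst measurable_cong_sets[OF sets_eq_borel refl])

lemma integrable_bounded_on_unit_interval:
  fixes f :: "real \<Rightarrow> real"
  assumes f: "f \<in> borel_measurable borel" and b: "\<And>x. 0 < x \<Longrightarrow> x \<le> 1 \<Longrightarrow> \<bar>f x\<bar> \<le> C"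
  shows "integrable \<Lambda> f"
proof (rule finite_measure.integrable_const_bound[OF finite, where B=C])
  show "AE x in \<Lambda>. norm (f x) \<le> C"
    using AE_in_unit_interval by eventually_elim (use b in auto)
qed (rule measurable_from_borel[OF f])

lemma integral_nonneg_on_unit_interval:
  fixes f :: "real \<Rightarrow> real"
  assumes "\<And>x. 0 < x \<Longrightarrow> x \<le> 1 \<Longrightarrow> 0 \<le> f x"
  shows "0 \<le> (\<integral>x. f x \<partial>\<Lambda>)"
proof (rule integral_nonneg_AE)
  show "AE x in \<Lambda>. 0 \<le> f x" using AE_in_unit_interval by eventually_elim (use assms in auto)
qed

lemma integrable_nonneg_on_unit_interval:
  fixes f :: "real \<Rightarrow> real"
  assumes f: "f \<in> borel_measurable borel" and nonneg: "\<And>x. 0 < x \<Longrightarrow> x \<le> 1 \<Longrightarrow> 0 \<le> f x"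
    and fin: "(\<integral>\<^sup>+ x. ennreal (f x) \<partial>\<Lambda>) < \<infinity>"
  shows "integrable \<Lambda> f"
proof (rule integrableI_nonneg)
  show "AE x in \<Lambda>. 0 \<le> f x" using AE_in_unit_interval by eventually_elim (use nonneg in auto)
qed (use measurable_from_borel[OF f] fin in auto)

lemma rate_kernel_integrable: "j \<ge> 2 \<Longrightarrow> integrable \<Lambda> (\<lambda>x. x^j * (1-x)^(n-j) / x^2)"
  by (rule integrable_bounded_on_unit_interval[where C=1]) (use rate_kernel_le_one in auto)

lemma scaled_rate_kernel_integrable:
  "r \<ge> 2 \<Longrightarrow> integrable \<Lambda> (\<lambda>x. (2*real i*x)^r * (1-x)^(i-r) / x^2)"
  by (rule integrable_bounded_on_unit_interval[where C="(2*real i)^r"]) (use scaled_rate_kernel_le in auto)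

lemma merger_rate_nonneg: "0 \<le> merger_rate \<Lambda> n j"
  unfolding merger_rate_def lam_def by (simp add: integral_nonneg_on_unit_interval)

lemma exists_interior_mass: "\<exists>\<delta>. 0 < \<delta> \<and> \<delta> \<le> 1/2 \<and> measure \<Lambda> {\<delta>..1-\<delta>} > 0"
proof (rule ccontr)
  assume neg: "\<not> ?thesis"
  define A where "A m = {1/(real m+2) .. 1 - 1/(real m+2)}" for m :: nat
  have A0: "emeasure \<Lambda> (A m) = 0" for m
  proof -
    have "0 < 1/(real m+2)" "1/(real m+2) \<le> 1/2" by (auto simp: field_simps)
    then have "\<not> measure \<Lambda> (A m) > 0" using neg unfolding A_def by blast
    then have "measure \<Lambda> (A m) = 0" using measure_nonneg[of \<Lambda> "A m"] by linarith
    then show ?thesis using finite_measure.emeasure_eq_measure[OF finite, of "A m"] by simp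
  qed
  have inc: "incseq A"
  proof (rule incseq_SucI)
    fix m
    have "1/(real (Suc m)+2) \<le> 1/(real m+2)" by (simp add: frac_le)
    then show "A m \<subseteq> A (Suc m)" unfolding A_def by auto
  qed
  have U: "(\<Union>m. A m) = {0<..<1}" unfolding A_def by (rule UN_shrinking_intervals_eq)
  have "range A \<subseteq> sets \<Lambda>" using sets_eq_borel by (simp add: A_def image_subset_iff)
  then have "emeasure \<Lambda> {0<..<1::real} = (SUP m. emeasure \<Lambda> (A m))"
    using SUP_emeasure_incseq[OF _ inc] U by simp
  also have "\<dots> = 0" using A0 by simp
  finally have "emeasure \<Lambda> {0<..<1::real} = 0" .
  moreover have "emeasure \<Lambda> {0<..<1::real} = emeasure \<Lambda> UNIV"
    using AE_in_unit_interval sets_eq_borel by (intro emeasure_eq_AE) auto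
  ultimately show False using nontrivial by simp
qed

lemma collision_moment_div_integrable: "integrable \<Lambda> (\<lambda>x. collision_moment n x / x^2)"
  unfolding collision_moment_div_eq
  by (intro Bochner_Integration.integrable_sum integrable_mult_left integrable_mult_right rate_kernel_integrable) auto

lemma sum_merger_moment_eq_integral:
  "(\<Sum>k=1..n-1. merger_rate \<Lambda> n (k+1) * (real k * real (n-k))) = (\<integral>x. collision_moment n x / x^2 \<partial>\<Lambda>)"
proof -
  have "(\<Sum>k=1..n-1. merger_rate \<Lambda> n (k+1) * (real k * real (n-k)))
      = (\<Sum>k=1..n-1. \<integral>x. real (n choose (k+1)) * (x^(k+1) * (1-x)^(n-(k+1)) / x^2) * (real k * real (n-k)) \<partial>\<Lambda>)"
    unfolding merger_rate_def lam_def
    by (intro sum.cong refl) (simp only: integral_mult_left_zero integral_mult_right_zero)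
  also have "\<dots> = (\<integral>x. collision_moment n x / x^2 \<partial>\<Lambda>)"
    unfolding collision_moment_div_eq
    by (rule Bochner_Integration.integral_sum[symmetric])
       (intro integrable_mult_left integrable_mult_right rate_kernel_integrable, auto)
  finally show ?thesis .
qed

lemma merger_moment_ge_quadratic:
  "\<exists>c>0. \<forall>n\<ge>2. c * real n^2 \<le> (\<Sum>k=1..n-1. merger_rate \<Lambda> n (k+1) * (real k * real (n-k)))"
proof -
  obtain \<delta> where \<delta>: "0 < \<delta>" "\<delta> \<le> 1/2" and mpos: "measure \<Lambda> {\<delta>..1-\<delta>} > 0"
    using exists_interior_mass by blast
  define N where "N = nat \<lceil>8/\<delta>\<rceil>"
  define c where "c = min (\<delta>/4) (\<delta>^N / real N^2)"
  have N: "real N * \<delta> \<ge> 8"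
  proof -
    have "real N \<ge> 8/\<delta>" unfolding N_def by linarith
    then show ?thesis using \<delta> by (simp add: divide_le_eq)
  qed
  have Npos: "N > 0" using N by (cases N) auto
  have cpos: "c > 0" unfolding c_def using \<delta> Npos by simp
  have c: "c \<le> \<delta>/4" "c * real N^2 \<le> \<delta>^N" "c \<ge> 0"
  proof -
    show "c \<le> \<delta>/4" unfolding c_def by (rule min.cobounded1)
    have "c \<le> \<delta>^N / real N^2" unfolding c_def by (rule min.cobounded2)
    then show "c * real N^2 \<le> \<delta>^N" using Npos by (simp add: le_divide_eq)
  qed (use cpos in simp)
  have "c * measure \<Lambda> {\<delta>..1-\<delta>} * real n^2 \<le> (\<Sum>k=1..n-1. merger_rate \<Lambda> n (k+1) * (real k * real (n-k)))"
    if n: "n \<ge> 2" for n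
  proof -
    have "(\<integral>x. c * real n^2 * indicator {\<delta>..1-\<delta>} x \<partial>\<Lambda>) \<le> (\<integral>x. collision_moment n x / x^2 \<partial>\<Lambda>)"
    proof (rule integral_mono_AE)
      show "integrable \<Lambda> (\<lambda>x. c * real n^2 * indicator {\<delta>..1-\<delta>} x)"
        by (intro integrable_mult_right integrable_bounded_on_unit_interval[where C=1])
           (auto simp: indicator_def)
      show "AE x in \<Lambda>. c * real n^2 * indicator {\<delta>..1-\<delta>} x \<le> collision_moment n x / x^2"
        using AE_in_unit_interval
        by eventually_elim (use collision_moment_ge_indicator[OF \<delta> n _ _ c N] in auto)
    qed (rule collision_moment_div_integrable)
    then show ?thesis
      unfolding sum_merger_moment_eq_integral using space_eq_UNIV by (simp add: algebra_simps)
  qed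
  then show ?thesis using cpos mpos by (intro exI[of _ "c * measure \<Lambda> {\<delta>..1-\<delta>}"]) auto
qed

lemma sum_merger_rate_pos:
  assumes n: "n \<ge> 2"
  shows "0 < (\<Sum>k=1..n-1. merger_rate \<Lambda> n (k+1))"
proof -
  obtain c where c: "c > 0"
    and moment: "\<forall>n\<ge>2. c * real n^2 \<le> (\<Sum>k=1..n-1. merger_rate \<Lambda> n (k+1) * (real k * real (n-k)))"
    using merger_moment_ge_quadratic by blast
  have "c * real n^2 \<le> (\<Sum>k=1..n-1. merger_rate \<Lambda> n (k+1) * (real k * real (n-k)))"
    using moment n by blast
  also have "\<dots> \<le> (\<Sum>k=1..n-1. merger_rate \<Lambda> n (k+1) * real n^2)"
  proof (rule sum_mono)
    fix k assume k: "k \<in> {1..n-1}"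
    have "real k * real (n-k) \<le> real n * real n" using k by (intro mult_mono) auto
    then show "merger_rate \<Lambda> n (k+1) * (real k * real (n-k)) \<le> merger_rate \<Lambda> n (k+1) * real n^2"
      using merger_rate_nonneg by (intro mult_left_mono) (auto simp: power2_eq_square)
  qed
  also have "\<dots> = (\<Sum>k=1..n-1. merger_rate \<Lambda> n (k+1)) * real n^2" by (simp add: sum_distrib_right)
  finally have "c \<le> (\<Sum>k=1..n-1. merger_rate \<Lambda> n (k+1))" using n by simp
  then show ?thesis using c by linarith
qed

definition window_weight :: "(real \<Rightarrow> real) \<Rightarrow> nat \<Rightarrow> nat \<Rightarrow> real" where
  "window_weight \<phi> r i = window_max \<phi> i / real i * (\<integral>x. (2*real i*x)^r * (1-x)^(i-r) / x^2 \<partial>\<Lambda>)"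

lemma window_weight_nonneg:
  assumes pos: "\<And>x. x > 0 \<Longrightarrow> \<phi> x > 0"
  shows "0 \<le> window_weight \<phi> r i"
proof (cases "i = 0")
  case False
  then have "0 < window_max \<phi> i" using window_max_pos[OF pos, where i=i] by simp
  moreover have "0 \<le> (\<integral>x. (2*real i*x)^r * (1-x)^(i-r) / x^2 \<partial>\<Lambda>)"
    by (rule integral_nonneg_on_unit_interval) simp
  ultimately show ?thesis unfolding window_weight_def by simp
qed (simp add: window_weight_def)

lemma merger_rate_le_window_weight:
  assumes pos: "\<And>x. x > 0 \<Longrightarrow> \<phi> x > 0" and r: "r \<ge> 2"
    and i: "1 \<le> i" "i \<le> n" "n \<le> 2*i"
  shows "merger_rate \<Lambda> n r * \<phi> (real n) / real n \<le> window_weight \<phi> r i"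
proof -
  have c: "real (n choose r) \<le> (2*real i)^r"
  proof (cases "r \<le> n")
    case True
    then have "n choose r \<le> n ^ r" by (rule binomial_le_pow)
    then have "real (n choose r) \<le> real n ^ r" by (metis of_nat_le_iff of_nat_power)
    also have "\<dots> \<le> (2*real i)^r" using i by (intro power_mono) auto
    finally show ?thesis .
  qed (simp add: binomial_eq_0)
  have "merger_rate \<Lambda> n r = (\<integral>x. real (n choose r) * (x^r * (1-x)^(n-r) / x^2) \<partial>\<Lambda>)"
    unfolding merger_rate_def lam_def by (simp only: integral_mult_right_zero)
  also have "\<dots> \<le> (\<integral>x. (2*real i*x)^r * (1-x)^(i-r) / x^2 \<partial>\<Lambda>)"
  proof (rule integral_mono_AE)
    show "integrable \<Lambda> (\<lambda>x. real (n choose r) * (x^r * (1-x)^(n-r) / x^2))"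
      using rate_kernel_integrable[OF r] by (rule integrable_mult_right)
    show "integrable \<Lambda> (\<lambda>x. (2*real i*x)^r * (1-x)^(i-r) / x^2)"
      by (rule scaled_rate_kernel_integrable[OF r])
    show "AE x in \<Lambda>. real (n choose r) * (x^r * (1-x)^(n-r) / x^2) \<le> (2*real i*x)^r * (1-x)^(i-r) / x^2"
      using AE_in_unit_interval
    proof eventually_elim
      case (elim x)
      have "(1-x)^(n-r) \<le> (1-x)^(i-r)" using elim i by (intro power_decreasing) auto
      have "real (n choose r) * (x^r * (1-x)^(n-r) / x^2) = real (n choose r) * (1-x)^(n-r) * (x^r / x^2)"
        by simp
      also have "\<dots> \<le> (2*real i)^r * (1-x)^(i-r) * (x^r / x^2)"
        using c \<open>(1-x)^(n-r) \<le> (1-x)^(i-r)\<close> elim by (intro mult_right_mono mult_mono) auto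
      also have "\<dots> = (2*real i*x)^r * (1-x)^(i-r) / x^2" by (simp add: power_mult_distrib)
      finally show ?case .
    qed
  qed
  finally have q: "merger_rate \<Lambda> n r \<le> (\<integral>x. (2*real i*x)^r * (1-x)^(i-r) / x^2 \<partial>\<Lambda>)" .
  have f: "\<phi> (real n) / real n \<le> window_max \<phi> i / real i"
    using window_max_ge[of n i \<phi>] pos[of n] i by (intro frac_le) auto
  have "merger_rate \<Lambda> n r * \<phi> (real n) / real n = (\<phi> (real n) / real n) * merger_rate \<Lambda> n r"
    by simp
  also have "\<dots> \<le> (window_max \<phi> i / real i) * (\<integral>x. (2*real i*x)^r * (1-x)^(i-r) / x^2 \<partial>\<Lambda>)"
    using f q merger_rate_nonneg pos[of n] i window_max_pos[where \<phi>=\<phi>, OF pos i(1)] by (intro mult_mono) auto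
  finally show ?thesis unfolding window_weight_def .
qed

lemma window_weight_sum_le:
  assumes r: "r \<ge> 2"
    and kernel_sum: "\<And>x N. 0 < x \<Longrightarrow> x \<le> 1 \<Longrightarrow> (\<Sum>i<N. window_kernel \<phi> r i x) \<le> A * \<phi> (1/x) + B"
    and i\<phi>: "integrable \<Lambda> (\<lambda>x. \<phi> (1/x) / x^2)" and i2: "integrable \<Lambda> (\<lambda>x. 1 / x^2)"
  shows "(\<Sum>i<N. window_weight \<phi> r i) \<le> A * (\<integral>x. \<phi> (1/x) / x^2 \<partial>\<Lambda>) + B * (\<integral>x. 1 / x^2 \<partial>\<Lambda>)"
proof -
  define c where "c i = window_max \<phi> i / real i" for i
  have "(\<Sum>i<N. window_weight \<phi> r i) = (\<Sum>i<N. (\<integral>x. c i * ((2*real i*x)^r * (1-x)^(i-r) / x^2) \<partial>\<Lambda>))"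
    unfolding window_weight_def c_def by (intro sum.cong refl) (simp only: integral_mult_right_zero)
  also have "\<dots> = (\<integral>x. (\<Sum>i<N. c i * ((2*real i*x)^r * (1-x)^(i-r) / x^2)) \<partial>\<Lambda>)"
    by (rule Bochner_Integration.integral_sum[symmetric]) (intro integrable_mult_right scaled_rate_kernel_integrable[OF r])
  also have "\<dots> \<le> (\<integral>x. A * (\<phi> (1/x) / x^2) + B * (1 / x^2) \<partial>\<Lambda>)"
  proof (rule integral_mono_AE)
    show "integrable \<Lambda> (\<lambda>x. \<Sum>i<N. c i * ((2*real i*x)^r * (1-x)^(i-r) / x^2))"
      by (intro Bochner_Integration.integrable_sum integrable_mult_right scaled_rate_kernel_integrable[OF r])
    show "integrable \<Lambda> (\<lambda>x. A * (\<phi> (1/x) / x^2) + B * (1 / x^2))"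
      using i\<phi> i2 by (intro Bochner_Integration.integrable_add integrable_mult_right)
    show "AE x in \<Lambda>. (\<Sum>i<N. c i * ((2*real i*x)^r * (1-x)^(i-r) / x^2)) \<le> A * (\<phi> (1/x) / x^2) + B * (1 / x^2)"
      using AE_in_unit_interval
    proof eventually_elim
      case (elim x)
      have "(\<Sum>i<N. c i * ((2*real i*x)^r * (1-x)^(i-r) / x^2)) = (\<Sum>i<N. window_kernel \<phi> r i x) / x^2"
        by (simp add: sum_divide_distrib mult.assoc c_def window_kernel_def)
      also have "\<dots> \<le> (A * \<phi> (1/x) + B) / x^2"
        using kernel_sum[of x N] elim by (intro divide_right_mono) auto
      finally show ?case by (simp add: add_divide_distrib)
    qed
  qed
  also have "\<dots> = A * (\<integral>x. \<phi> (1/x) / x^2 \<partial>\<Lambda>) + B * (\<integral>x. 1 / x^2 \<partial>\<Lambda>)"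
    using i\<phi> i2 by (subst Bochner_Integration.integral_add) (auto simp only: integral_mult_right_zero intro: integrable_mult_right)
  finally show ?thesis .
qed

lemma window_weight_sum_last_ge:
  assumes pos: "\<And>x. x > 0 \<Longrightarrow> \<phi> x > 0" and r: "r \<ge> 2" and n: "n \<ge> r" and k: "k \<in> {1..n-1}"
  shows "real k * real (n-k) / real n^2 * (merger_rate \<Lambda> n r * \<phi> (real n))
           \<le> (\<Sum>i=n-k+1..n. window_weight \<phi> r i)"
proof -
  have v0: "0 \<le> merger_rate \<Lambda> n r * \<phi> (real n) / real n"
    using merger_rate_nonneg pos[of n] n r by simp
  have "real k * real (n-k) / real n * (merger_rate \<Lambda> n r * \<phi> (real n) / real n)
      \<le> (\<Sum>i=n-k+1..n. window_weight \<phi> r i)"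
  proof (rule sum_last_terms_ge)
    show "1 \<le> k" "k \<le> n - 1" using k by auto
    show "\<And>i. 0 \<le> window_weight \<phi> r i" by (rule window_weight_nonneg[OF pos])
    show "0 \<le> merger_rate \<Lambda> n r * \<phi> (real n) / real n" by (rule v0)
    show "merger_rate \<Lambda> n r * \<phi> (real n) / real n \<le> window_weight \<phi> r i"
      if "1 \<le> i" "i \<le> n" "n \<le> 2*i" for i
      using merger_rate_le_window_weight[OF pos r that] .
  qed
  then show ?thesis by (simp add: power2_eq_square)
qed

lemma window_weight_partial_sums_supersolution:
  assumes pos: "\<And>x. x > 0 \<Longrightarrow> \<phi> x > 0" and r: "r \<ge> 2" and n: "n \<ge> r" and c: "c > 0"
    and moment: "c * real n^2 \<le> (\<Sum>k=1..n-1. merger_rate \<Lambda> n (k+1) * (real k * real (n-k)))"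
  defines "b \<equiv> \<lambda>m. (\<Sum>i=1..m. window_weight \<phi> r i) / c"
  shows "merger_rate \<Lambda> n r * \<phi> (real n) \<le> (\<Sum>k=1..n-1. merger_rate \<Lambda> n (k+1) * (b n - b (n-k)))"
proof -
  define \<psi> where "\<psi> = merger_rate \<Lambda> n r * \<phi> (real n)"
  have n2: "n \<ge> 2" using n r by simp
  have \<psi>0: "\<psi> \<ge> 0" using merger_rate_nonneg pos[of n] n2 by (simp add: \<psi>_def)
  have "\<psi> = \<psi> / (c * real n^2) * (c * real n^2)" using c n2 by simp
  also have "\<dots> \<le> \<psi> / (c * real n^2) * (\<Sum>k=1..n-1. merger_rate \<Lambda> n (k+1) * (real k * real (n-k)))"
    using moment \<psi>0 c by (intro mult_left_mono) auto
  also have "\<dots> = (\<Sum>k=1..n-1. merger_rate \<Lambda> n (k+1) * (real k * real (n-k) / real n^2 * \<psi> / c))"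
    by (simp add: sum_distrib_left field_simps)
  also have "\<dots> \<le> (\<Sum>k=1..n-1. merger_rate \<Lambda> n (k+1) * (b n - b (n-k)))"
  proof (intro sum_mono mult_left_mono merger_rate_nonneg)
    fix k assume k: "k \<in> {1..n-1}"
    have "b n - b (n-k) = ((\<Sum>i=1..n. window_weight \<phi> r i) - (\<Sum>i=1..n-k. window_weight \<phi> r i)) / c"
      unfolding b_def by (simp add: diff_divide_distrib)
    also have "\<dots> = (\<Sum>i=n-k+1..n. window_weight \<phi> r i) / c"
      using sum_atLeastAtMost_diff_last[where w="window_weight \<phi> r" and k=k and n=n] k by simp
    finally have "b n - b (n-k) = (\<Sum>i=n-k+1..n. window_weight \<phi> r i) / c" .
    with divide_right_mono[OF window_weight_sum_last_ge[where \<phi>=\<phi>, OF pos r n k], of c] c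
    show "real k * real (n-k) / real n^2 * \<psi> / c \<le> b n - b (n-k)" unfolding \<psi>_def by simp
  qed
  finally show ?thesis unfolding \<psi>_def .
qed

lemma bounded_supersolution:
  assumes sv: "slowly_varying \<phi>" and r: "r \<ge> 2"
    and i\<phi>: "integrable \<Lambda> (\<lambda>x. \<phi> (1/x) / x^2)" and i2: "integrable \<Lambda> (\<lambda>x. 1 / x^2)"
  shows "\<exists>b C. (\<forall>m. 0 \<le> b m \<and> b m \<le> C) \<and>
    (\<forall>n\<ge>r. merger_rate \<Lambda> n r * \<phi> (real n) \<le> (\<Sum>k=1..n-1. merger_rate \<Lambda> n (k+1) * (b n - b (n-k))))"
proof -
  have pos: "\<And>x. x > 0 \<Longrightarrow> \<phi> x > 0" using slowly_varying_pos[OF sv] .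
  obtain c where c: "c > 0"
    and moment: "\<And>n. n \<ge> 2 \<Longrightarrow> c * real n^2 \<le> (\<Sum>k=1..n-1. merger_rate \<Lambda> n (k+1) * (real k * real (n-k)))"
    using merger_moment_ge_quadratic by blast
  obtain X where "X > 0" and "\<forall>y\<ge>X. \<forall>z\<ge>X. \<phi> y \<le> 2 * max (y/z) (z/y) * \<phi> z"
    using slowly_varying_potter_bound[OF sv] by blast
  then have potter: "\<And>y z. max X 2 \<le> y \<Longrightarrow> max X 2 \<le> z \<Longrightarrow> \<phi> y \<le> 2 * max (y/z) (z/y) * \<phi> z"
    by simp
  obtain A B where AB: "\<And>x N. 0 < x \<Longrightarrow> x \<le> 1 \<Longrightarrow> (\<Sum>i<N. window_kernel \<phi> r i x) \<le> A * \<phi> (1/x) + B"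
    using window_kernel_sum_le[where \<phi>=\<phi> and X="max X 2", OF pos potter _ r] by force
  define S where "S = A * (\<integral>x. \<phi> (1/x) / x^2 \<partial>\<Lambda>) + B * (\<integral>x. 1 / x^2 \<partial>\<Lambda>)"
  define b where "b m = (\<Sum>i=1..m. window_weight \<phi> r i) / c" for m
  have w0: "\<And>i. 0 \<le> window_weight \<phi> r i" using window_weight_nonneg[OF pos] .
  have "0 \<le> b m \<and> b m \<le> S / c" for m
  proof -
    have "(\<Sum>i=1..m. window_weight \<phi> r i) \<le> (\<Sum>i<Suc m. window_weight \<phi> r i)"
      by (rule sum_mono2) (auto simp: w0)
    also have "\<dots> \<le> S" unfolding S_def by (rule window_weight_sum_le[OF r AB i\<phi> i2])
    finally have "(\<Sum>i=1..m. window_weight \<phi> r i) \<le> S" .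
    moreover have "0 \<le> (\<Sum>i=1..m. window_weight \<phi> r i)" by (rule sum_nonneg) (rule w0)
    ultimately show ?thesis unfolding b_def using c by (simp add: divide_right_mono)
  qed
  moreover have "merger_rate \<Lambda> n r * \<phi> (real n) \<le> (\<Sum>k=1..n-1. merger_rate \<Lambda> n (k+1) * (b n - b (n-k)))"
    if "n \<ge> r" for n
    unfolding b_def using window_weight_partial_sums_supersolution[OF pos r that c moment] that r by simp
  ultimately show ?thesis by blast
qed

lemma lam_total_mult_recursion:
  assumes n: "n \<ge> 2"
    and rec: "a n = p_coal \<Lambda> n l * \<phi> (real n) + (\<Sum>k=1..n-1. p_coal \<Lambda> n k * a (n - k))"
  shows "(\<Sum>k=1..n-1. merger_rate \<Lambda> n (k+1)) * a n
           = merger_rate \<Lambda> n (Suc l) * \<phi> (real n) + (\<Sum>k=1..n-1. merger_rate \<Lambda> n (k+1) * a (n-k))"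
proof -
  have L: "lam_total \<Lambda> n = (\<Sum>k=1..n-1. merger_rate \<Lambda> n (k+1))" "lam_total \<Lambda> n \<noteq> 0"
    using lam_total_eq_sum_merger_rate[OF n] sum_merger_rate_pos[OF n] by auto
  have "lam_total \<Lambda> n * a n = lam_total \<Lambda> n * p_coal \<Lambda> n l * \<phi> (real n)
      + (\<Sum>k=1..n-1. lam_total \<Lambda> n * p_coal \<Lambda> n k * a (n-k))"
    using rec by (simp add: distrib_left sum_distrib_left mult.assoc)
  also have "\<dots> = merger_rate \<Lambda> n (Suc l) * \<phi> (real n) + (\<Sum>k=1..n-1. merger_rate \<Lambda> n (k+1) * a (n-k))"
    using L(2) by (simp add: p_coal_def merger_rate_def)
  finally show ?thesis unfolding L(1) .
qed

lemma p_coal_recursion_le_supersolution: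
  assumes l: "l \<ge> 1" and pos: "\<And>x. x > 0 \<Longrightarrow> \<phi> x > 0"
    and init: "\<And>n. 1 \<le> n \<Longrightarrow> n \<le> l \<Longrightarrow> a n = 0"
    and rec: "\<And>n. n > l \<Longrightarrow> a n = p_coal \<Lambda> n l * \<phi> (real n) + (\<Sum>k=1..n-1. p_coal \<Lambda> n k * a (n - k))"
    and b: "\<And>m. 0 \<le> b m"
    and super: "\<And>n. n \<ge> Suc l \<Longrightarrow> merger_rate \<Lambda> n (Suc l) * \<phi> (real n)
                  \<le> (\<Sum>k=1..n-1. merger_rate \<Lambda> n (k+1) * (b n - b (n-k)))"
    and n: "1 \<le> n"
  shows "0 \<le> a n \<and> a n \<le> b n"
proof (rule recursion_le_supersolution[where q="\<lambda>n k. merger_rate \<Lambda> n (k+1)" and l=l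
      and \<psi>="\<lambda>n. merger_rate \<Lambda> n (Suc l) * \<phi> (real n)"])
  fix n assume "l < n"
  then have n2: "2 \<le> n" using l by simp
  show "0 < (\<Sum>k=1..n-1. merger_rate \<Lambda> n (k+1))" by (rule sum_merger_rate_pos[OF n2])
  show "(\<Sum>k=1..n-1. merger_rate \<Lambda> n (k+1)) * a n
      = merger_rate \<Lambda> n (Suc l) * \<phi> (real n) + (\<Sum>k=1..n-1. merger_rate \<Lambda> n (k+1) * a (n-k))"
    by (rule lam_total_mult_recursion[where a=a and \<phi>=\<phi> and l=l, OF n2 rec[OF \<open>l < n\<close>]])
  show "0 \<le> merger_rate \<Lambda> n (Suc l) * \<phi> (real n)"
    using merger_rate_nonneg pos[of "real n"] n2 by simp
  show "merger_rate \<Lambda> n (Suc l) * \<phi> (real n) \<le> (\<Sum>k=1..n-1. merger_rate \<Lambda> n (k+1) * (b n - b (n-k)))"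
    using super \<open>l < n\<close> by simp
qed (use n init b merger_rate_nonneg in simp_all)

end

lemma unit_interval_measureI:
  assumes sets: "sets \<Lambda> = sets borel" and fin: "finite_measure \<Lambda>" and nonzero: "emeasure \<Lambda> UNIV \<noteq> 0"
    and "emeasure \<Lambda> (- {0..1}) = 0" "emeasure \<Lambda> {0} = 0" "emeasure \<Lambda> {1} = 0"
  shows "unit_interval_measure \<Lambda>"
proof (rule unit_interval_measure.intro[OF sets fin _ nonzero])
  have "- {0..1} \<union> {0} \<union> {1} \<in> null_sets \<Lambda>"
    using assms(4-6) sets by (intro null_sets.Un) (auto simp: null_sets_def)
  then show "AE x in \<Lambda>. 0 < x \<and> x < 1" by (rule AE_I') auto
qed

theorem lemma2:
  fixes \<Lambda> :: "real measure" and \<phi> :: "real \<Rightarrow> real" and a :: "nat \<Rightarrow> real" and l :: nat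
  assumes sets_L: "sets \<Lambda> = sets borel"
    and fin: "finite_measure \<Lambda>"
    and nonzero: "emeasure \<Lambda> UNIV \<noteq> 0"
    and supp: "emeasure \<Lambda> (- {0..1}) = 0"
    and no_atom0: "emeasure \<Lambda> {0} = 0"
    and no_atom1: "emeasure \<Lambda> {1} = 0"
    and m2: "(\<integral>\<^sup>+ x. ennreal (1 / x ^ 2) \<partial>\<Lambda>) < \<infinity>"
    and l_pos: "l \<ge> 1"
    and sv: "slowly_varying \<phi>"
    and int_phi: "(\<integral>\<^sup>+ y. ennreal (\<phi> (1 / y) / y ^ 2) \<partial>\<Lambda>) < \<infinity>"
    and init: "\<And>n. 1 \<le> n \<Longrightarrow> n \<le> l \<Longrightarrow> a n = 0"
    and rec: "\<And>n. n > l \<Longrightarrow>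
               a n = p_coal \<Lambda> n l * \<phi> (real n) + (\<Sum>k=1..n-1. p_coal \<Lambda> n k * a (n - k))"
  shows "\<exists>C. \<forall>n\<ge>1. \<bar>a n\<bar> \<le> C"
proof -
  interpret unit_interval_measure \<Lambda>
    using sets_L fin nonzero supp no_atom0 no_atom1 by (rule unit_interval_measureI)
  have [measurable]: "\<phi> \<in> borel_measurable borel" using slowly_varying_measurable[OF sv] .
  have i\<phi>: "integrable \<Lambda> (\<lambda>x. \<phi> (1/x) / x^2)"
    by (rule integrable_nonneg_on_unit_interval[OF _ _ int_phi])
       (measurable, use slowly_varying_pos[OF sv] in \<open>auto intro: less_imp_le\<close>)
  have i2: "integrable \<Lambda> (\<lambda>x. 1 / x^2)"
    by (rule integrable_nonneg_on_unit_interval[OF _ _ m2]) auto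
  obtain b C where b: "\<And>m. 0 \<le> b m \<and> b m \<le> C"
    and super: "\<And>n. n \<ge> Suc l \<Longrightarrow> merger_rate \<Lambda> n (Suc l) * \<phi> (real n)
                  \<le> (\<Sum>k=1..n-1. merger_rate \<Lambda> n (k+1) * (b n - b (n-k)))"
    using bounded_supersolution[OF sv _ i\<phi> i2, of "Suc l"] l_pos by auto
  have "\<bar>a n\<bar> \<le> C" if "1 \<le> n" for n
    using p_coal_recursion_le_supersolution[OF l_pos slowly_varying_pos[OF sv] init rec
        conjunct1[OF b] super that] b[of n]
    by auto
  then show ?thesis by blast
qed

end
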